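(* Let $A(z)=|z|^2I_d-z\otimes z$ on $\mathbb{R}^d$. Let $u^*_t$ be a solution of the Landau equation with Maxwellian molecules, $$\frac{\partial u^*_t}{\partial t}+\nabla\cdot(v^*_tu^*_t)=0,\qquad v^*_t(x)=-\int_{\mathbb{R}^d}A(x-y)\big[\nabla\log u^*_t(x)-\nabla\log u^*_t(y)\big]u^*_t(y)\,\mathrm{d}y,$$ and let $u_t$ satisfy the continuity equation $\frac{\partial u_t}{\partial t}+\nabla\cdot(v_tu_t)=0$ with $v_t(x)=b(x)-D_t(x)s_t(x)$, where $s_t$ is a sufficiently regular vector field, $b(x)=-(d-1)(x-V)$, and $$D_{i,j}(t,x)=\delta_{i,j}\big(|x|^2+2E-2V\cdot x\big)+V_ix_j+V_jx_i-x_ix_j-\Sigma_{i,j}(t),$$ $$\Sigma_{i,j}(t)=\Sigma_{i,j}(\infty)-\big(\Sigma_{i,j}(\infty)-\Sigma_{i,j}(0)\big)e^{-4dt},\quad\Sigma_{i,j}(0)=\int x_ix_ju^*_0\,\mathrm{d}x,\quad\Sigma_{i,j}(\infty)=\tfrac1d\big(\delta_{i,j}(2E-|V|^2)+dV_iV_j\big),$$ with $V=\int xu^*_0\,\mathrm{d}x$, $2E=\int|x|^2u^*_0\,\mathrm{d}x$ (so that $b=A*\nabla u^*_t$ and $D_t=A*u^*_t$). Assume the initial first and second moments match: $\int xu_0\,\mathrm{d}x=\int xu^*_0\,\mathrm{d}x$ and $\int x_ix_ju_0\,\mathrm{d}x=\int x_ix_ju^*_0\,\mathrm{d}x$ for all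 $i,j$. Then $$\frac{\mathrm{d}}{\mathrm{d}t}\mathrm{KL}(u_t\|u^*_t)\le\frac12\int_{\mathbb{R}^d}|s_t-\nabla\log u_t|^2_{D_t}\,u_t\,\mathrm{d}x.$$
   Context: $\mathrm{KL}(u_1\|u_2)=\int\log\frac{u_1}{u_2}\,\mathrm{d}u_1$ if $u_1\ll u_2$ and $+\infty$ otherwise. For a positive semi-definite matrix $M$, $|w|^2_M=w^TMw$. Convolution of a matrix kernel with a density is entrywise. *)

theory Defs
  imports "HOL-Probability.Probability"
begin

definition grad :: "(real^'d \<Rightarrow> real) \<Rightarrow> real^'d \<Rightarrow> real^'d" where
  "grad f x = (\<chi> i. frechet_derivative f (at x) (axis i 1))"

definition divg :: "(real^'d \<Rightarrow> real^'d) \<Rightarrow> real^'d \<Rightarrow> real" where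
  "divg F x = (\<Sum>i\<in>UNIV. frechet_derivative F (at x) (axis i 1) $ i)"

definition landauA :: "real^'d \<Rightarrow> real^'d^'d" where
  "landauA z = (\<chi> i j. (if i = j then (norm z)^2 else 0) - z $ i * z $ j)"

definition wnorm2 :: "real^'d^'d \<Rightarrow> real^'d \<Rightarrow> real" where
  "wnorm2 M w = w \<bullet> (M *v w)"

text \<open>KL(u1 || u2) for the measures with Lebesgue densities u1, u2, via the library notion
  (natural logarithm). KL_divergence b M N is KL(N || M).\<close>
definition KLdens :: "(real^'d \<Rightarrow> real) \<Rightarrow> (real^'d \<Rightarrow> real) \<Rightarrow> real" where
  "KLdens u1 u2 = KL_divergence (exp 1) (density lborel (\<lambda>x. ennreal (u2 x)))
                                       (density lborel (\<lambda>x. ennreal (u1 x)))"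

definition meanV :: "(real^'d \<Rightarrow> real) \<Rightarrow> real^'d" where
  "meanV f = integral\<^sup>L lborel (\<lambda>x. f x *\<^sub>R x)"

definition twoE :: "(real^'d \<Rightarrow> real) \<Rightarrow> real" where
  "twoE f = integral\<^sup>L lborel (\<lambda>x. (norm x)^2 * f x)"

definition Sigma0 :: "(real^'d \<Rightarrow> real) \<Rightarrow> 'd \<Rightarrow> 'd \<Rightarrow> real" where
  "Sigma0 f i j = integral\<^sup>L lborel (\<lambda>x. x $ i * x $ j * f x)"

definition SigmaInf :: "(real^'d \<Rightarrow> real) \<Rightarrow> 'd \<Rightarrow> 'd \<Rightarrow> real" where
  "SigmaInf f i j = (1 / real CARD('d)) *
     ((if i = j then twoE f - (norm (meanV f))^2 else 0)
      + real CARD('d) * meanV f $ i * meanV f $ j)"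

definition Sigma :: "(real^'d \<Rightarrow> real) \<Rightarrow> real \<Rightarrow> 'd \<Rightarrow> 'd \<Rightarrow> real" where
  "Sigma f t i j = SigmaInf f i j
     - (SigmaInf f i j - Sigma0 f i j) * exp (- 4 * real CARD('d) * t)"

text \<open>D_t(x), with u*_0 = f\<close>
definition Dmat :: "(real^'d \<Rightarrow> real) \<Rightarrow> real \<Rightarrow> real^'d \<Rightarrow> real^'d^'d" where
  "Dmat f t x = (\<chi> i j. (if i = j then (norm x)^2 + twoE f - 2 * (meanV f \<bullet> x) else 0)
        + meanV f $ i * x $ j + meanV f $ j * x $ i - x $ i * x $ j - Sigma f t i j)"

definition bfield :: "(real^'d \<Rightarrow> real) \<Rightarrow> real^'d \<Rightarrow> real^'d" where
  "bfield f x = - ((real CARD('d) - 1) *\<^sub>R (x - meanV f))"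

definition landau_vel :: "(real \<Rightarrow> real^'d \<Rightarrow> real) \<Rightarrow> real \<Rightarrow> real^'d \<Rightarrow> real^'d" where
  "landau_vel us t x = - integral\<^sup>L lborel (\<lambda>y. us t y *\<^sub>R
      (landauA (x - y) *v (grad (\<lambda>z. ln (us t z)) x - grad (\<lambda>z. ln (us t z)) y)))"

definition gauss_bounded :: "(real \<Rightarrow> real^'d \<Rightarrow> real) \<Rightarrow> bool" where
  "gauss_bounded g \<longleftrightarrow> (\<forall>T\<ge>0. \<exists>C c. c > 0 \<and>
     (\<forall>t\<in>{0..T}. \<forall>x. \<bar>g t x\<bar> \<le> C * exp (- c * (norm x)^2)))"

definition poly_bounded :: "(real \<Rightarrow> real^'d \<Rightarrow> real) \<Rightarrow> bool" where
  "poly_bounded g \<longleftrightarrow> (\<forall>T\<ge>0. \<exists>C (k::nat).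
     (\<forall>t\<in>{0..T}. \<forall>x. \<bar>g t x\<bar> \<le> C * (1 + norm x) ^ k))"

end

theory Submission
  imports Defs
begin

text \<open>
  Write \<open>KL(u\<^sub>t \<parallel> u*\<^sub>t) = \<integral> u\<^sub>t log (u\<^sub>t / u*\<^sub>t)\<close>. Differentiating under the integral sign and
  integrating by parts against both continuity equations gives
  \<open>d/dt KL = \<integral> (\<nabla>log u\<^sub>t - \<nabla>log u*\<^sub>t) \<cdot> (v\<^sub>t - v*\<^sub>t) u\<^sub>t\<close>.
  Since \<open>A(z)\<close> is a quadratic polynomial in \<open>z\<close>, the convolutions \<open>A * u*\<^sub>t\<close> and \<open>A * \<nabla>u*\<^sub>t\<close>
  only involve the mass, mean and second moments of \<open>u*\<^sub>t\<close>, so \<open>v*\<^sub>t = b - (A * u*\<^sub>t) \<nabla>log u*\<^sub>t\<close>.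
  Along the Landau flow mass and mean are conserved and the second moments solve a linear ODE
  relaxing at rate \<open>4d\<close>; its solution identifies \<open>A * u*\<^sub>t\<close> with \<open>D\<^sub>t\<close>. Hence
  \<open>v\<^sub>t - v*\<^sub>t = -D\<^sub>t (s\<^sub>t - \<nabla>log u*\<^sub>t)\<close>, and with \<open>a = s\<^sub>t - \<nabla>log u\<^sub>t\<close>, \<open>c = \<nabla>log u\<^sub>t - \<nabla>log u*\<^sub>t\<close>
  the integrand is \<open>-c \<cdot> D\<^sub>t (a + c) \<le> 1/2 a \<cdot> D\<^sub>t a\<close>, because \<open>D\<^sub>t = A * u*\<^sub>t\<close> is an average of
  positive semidefinite matrices. All interchanges of limits are justified by the Gaussian decay
  of \<open>u\<^sub>t, u*\<^sub>t\<close> and the polynomial growth of everything else.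
\<close>

section \<open>Gaussian decay and polynomial growth\<close>

lemma integrable_exp_minus_square:
  fixes c :: real assumes c: "c > 0"
  shows "integrable lborel (\<lambda>x::real. exp (- c * x\<^sup>2))"
proof -
  define \<sigma> where "\<sigma> = sqrt (1 / (2 * c))"
  have s2: "\<sigma>\<^sup>2 = 1 / (2*c)" using c by (simp add: \<sigma>_def)
  have pos: "sqrt (2 * pi * \<sigma>\<^sup>2) > 0" using c s2 by simp
  have e: "- (x - 0)\<^sup>2 / (2 * \<sigma>\<^sup>2) = - c * x\<^sup>2" for x
    using c by (simp add: s2 field_simps)
  have "\<sigma> > 0" using c by (simp add: \<sigma>_def)
  have "\<sigma> \<noteq> 0" using s2 c by auto
  have nd: "normal_density 0 \<sigma> x = 1 / sqrt (2 * pi * \<sigma>\<^sup>2) * exp (- c * x\<^sup>2)" for x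
    unfolding normal_density_def e by (rule refl)
  have E: "(\<lambda>x. sqrt (2 * pi * \<sigma>\<^sup>2) * normal_density 0 \<sigma> x) = (\<lambda>x::real. exp (- c * x\<^sup>2))"
    using pos \<open>\<sigma> \<noteq> 0\<close> by (intro ext) (simp add: nd)
  have "integrable lborel (\<lambda>x. sqrt (2 * pi * \<sigma>\<^sup>2) * normal_density 0 \<sigma> x)"
    using \<open>\<sigma> > 0\<close> by (intro integrable_mult_right integrable_normal_density) auto
  then show ?thesis unfolding E .
qed

lemma integrable_exp_minus_norm_square:
  fixes c :: real assumes c: "c > 0"
  shows "integrable lborel (\<lambda>x::'a::euclidean_space. exp (- c * (norm x)\<^sup>2))"
proof -
  have eq: "exp (- c * (norm x)\<^sup>2) = (\<Prod>b\<in>Basis. exp (- c * (x \<bullet> b)\<^sup>2))" for x :: 'a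
  proof -
    have "(norm x)\<^sup>2 = (\<Sum>b\<in>Basis. (x \<bullet> b)\<^sup>2)"
      unfolding power2_norm_eq_inner by (subst euclidean_inner) (simp add: power2_eq_square)
    then show ?thesis by (simp add: sum_distrib_left exp_sum[symmetric])
  qed
  have fin: "(\<integral>\<^sup>+y. ennreal (exp (- c * y\<^sup>2)) \<partial>lborel) < \<infinity>"
    using integrable_exp_minus_square[OF c] by (simp add: integrable_iff_bounded)
  have "(\<integral>\<^sup>+x. ennreal (norm (exp (- c * (norm x)\<^sup>2))) \<partial>(lborel::'a measure))
       = (\<integral>\<^sup>+x. (\<Prod>b\<in>Basis. ennreal (exp (- c * ((x::'a) \<bullet> b)\<^sup>2))) \<partial>lborel)"
  proof (intro nn_integral_cong)
    fix x :: 'a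
    have "norm (exp (- c * (norm x)\<^sup>2)) = exp (- c * (norm x)\<^sup>2)" by simp
    also have "\<dots> = (\<Prod>b\<in>Basis. exp (- c * (x \<bullet> b)\<^sup>2))" by (rule eq)
    finally show "ennreal (norm (exp (- c * (norm x)\<^sup>2))) = (\<Prod>b\<in>Basis. ennreal (exp (- c * (x \<bullet> b)\<^sup>2)))"
      by (metis prod_ennreal exp_ge_zero)
  qed
  also have "\<dots> = (\<integral>\<^sup>+y. ennreal (exp (- c * y\<^sup>2)) \<partial>lborel) ^ DIM('a)"
    by (subst nn_integral_lborel_prod[where f="\<lambda>b y. ennreal (exp (- c * y\<^sup>2))"]) auto
  also have "\<dots> < \<infinity>" using fin by (simp add: power_less_top_ennreal)
  finally show ?thesis by (simp add: integrable_iff_bounded)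
qed

definition gauss_bounded_on :: "'s set \<Rightarrow> ('s \<Rightarrow> 'a::real_normed_vector \<Rightarrow> real) \<Rightarrow> bool" where
  "gauss_bounded_on S f \<longleftrightarrow> (\<exists>C c. c > 0 \<and> (\<forall>\<tau>\<in>S. \<forall>x. \<bar>f \<tau> x\<bar> \<le> C * exp (- c * (norm x)\<^sup>2)))"

definition poly_bounded_on :: "'s set \<Rightarrow> ('s \<Rightarrow> 'a::real_normed_vector \<Rightarrow> real) \<Rightarrow> bool" where
  "poly_bounded_on S f \<longleftrightarrow> (\<exists>C k. \<forall>\<tau>\<in>S. \<forall>x. \<bar>f \<tau> x\<bar> \<le> C * (1 + norm x) ^ k)"

lemma poly_mult_exp_minus_square_le:
  fixes r c :: real assumes c: "c > 0" and r: "r \<ge> 0"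
  shows "(1 + r) ^ k * exp (- c * r\<^sup>2) \<le> exp ((real k)\<^sup>2 / (2 * c)) * exp (- (c/2) * r\<^sup>2)"
proof -
  have "(1 + r) ^ k \<le> exp r ^ k"
    using r by (intro power_mono) (auto simp: exp_ge_add_one_self)
  also have "\<dots> = exp (real k * r)" by (simp add: exp_of_nat_mult)
  finally have 1: "(1 + r) ^ k * exp (- c * r\<^sup>2) \<le> exp (real k * r) * exp (- c * r\<^sup>2)"
    by (intro mult_right_mono) auto
  have q: "real k * r - c * r\<^sup>2 \<le> (real k)\<^sup>2 / (2 * c) - (c/2) * r\<^sup>2"
  proof -
    have "0 \<le> (c/2) * (r - real k / c)\<^sup>2" using c by simp
    also have "(c/2) * (r - real k / c)\<^sup>2 = (c/2) * r\<^sup>2 - real k * r + (real k)\<^sup>2 / (2 * c)"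
      using c by (simp add: power2_eq_square field_simps)
    finally show ?thesis by simp
  qed
  have "exp (real k * r) * exp (- c * r\<^sup>2) = exp (real k * r - c * r\<^sup>2)" by (simp add: exp_add[symmetric])
  also have "\<dots> \<le> exp ((real k)\<^sup>2 / (2 * c) - (c/2) * r\<^sup>2)" using q by simp
  also have "\<dots> = exp ((real k)\<^sup>2 / (2 * c)) * exp (- (c/2) * r\<^sup>2)" by (simp add: exp_add[symmetric])
  finally show ?thesis using 1 by linarith
qed

lemma exp_minus_norm_square_translate_le:
  fixes x h :: "'a::real_normed_vector" and c :: real assumes c: "c > 0"
  shows "exp (- c * (norm (x + h))\<^sup>2) \<le> exp (c * (norm h)\<^sup>2) * exp (- (c/2) * (norm x)\<^sup>2)"
proof -
  have "norm x \<le> norm (x + h) + norm h" by (metis add_diff_cancel norm_triangle_ineq4)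
  then have "(norm x)\<^sup>2 \<le> (norm (x + h) + norm h)\<^sup>2" by (simp add: power_mono)
  also have "\<dots> \<le> 2 * (norm (x+h))\<^sup>2 + 2 * (norm h)\<^sup>2"
  proof -
    have "0 \<le> (norm (x+h) - norm h)\<^sup>2" by simp
    then show ?thesis unfolding power2_diff power2_sum by linarith
  qed
  finally have n2: "(norm x)\<^sup>2 \<le> 2 * (norm (x+h))\<^sup>2 + 2 * (norm h)\<^sup>2" .
  have "(c/2) * (norm x)\<^sup>2 \<le> (c/2) * (2 * (norm (x+h))\<^sup>2 + 2 * (norm h)\<^sup>2)"
    using c n2 by (intro mult_left_mono) auto
  then have "- c * (norm (x + h))\<^sup>2 \<le> c * (norm h)\<^sup>2 + - (c/2) * (norm x)\<^sup>2"
    by (simp add: algebra_simps)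
  then have "exp (- c * (norm (x + h))\<^sup>2) \<le> exp (c * (norm h)\<^sup>2 + - (c/2) * (norm x)\<^sup>2)"
    by (subst exp_le_cancel_iff)
  then show ?thesis by (simp only: exp_add)
qed

lemma poly_bounded_on_le:
  assumes "poly_bounded_on S g" "\<And>\<tau> x. \<tau> \<in> S \<Longrightarrow> \<bar>f \<tau> x\<bar> \<le> \<bar>g \<tau> x\<bar>"
  shows "poly_bounded_on S f"
proof -
  obtain C k where h: "\<forall>\<tau>\<in>S. \<forall>x. \<bar>g \<tau> x\<bar> \<le> C * (1 + norm x) ^ k"
    using assms(1) unfolding poly_bounded_on_def by blast
  have "\<forall>\<tau>\<in>S. \<forall>x. \<bar>f \<tau> x\<bar> \<le> C * (1 + norm x) ^ k" using h assms(2) by (blast intro: order_trans)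
  then show ?thesis unfolding poly_bounded_on_def by blast
qed

lemma gauss_bounded_on_le:
  assumes "gauss_bounded_on S g" "\<And>\<tau> x. \<tau> \<in> S \<Longrightarrow> \<bar>f \<tau> x\<bar> \<le> \<bar>g \<tau> x\<bar>"
  shows "gauss_bounded_on S f"
proof -
  obtain C c where c: "c > 0" and h: "\<forall>\<tau>\<in>S. \<forall>x. \<bar>g \<tau> x\<bar> \<le> C * exp (- c * (norm x)\<^sup>2)"
    using assms(1) unfolding gauss_bounded_on_def by blast
  have "\<forall>\<tau>\<in>S. \<forall>x. \<bar>f \<tau> x\<bar> \<le> C * exp (- c * (norm x)\<^sup>2)" using h assms(2) by (blast intro: order_trans)
  then show ?thesis using c unfolding gauss_bounded_on_def by blast
qed

lemma poly_bounded_on_bounded: "(\<And>\<tau> x. \<tau> \<in> S \<Longrightarrow> \<bar>f \<tau> x\<bar> \<le> B) \<Longrightarrow> poly_bounded_on S f"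
  unfolding poly_bounded_on_def by (rule exI[of _ B], rule exI[of _ 0]) auto

lemma poly_bounded_on_const[simp]: "poly_bounded_on S (\<lambda>\<tau> x. c)"
  by (rule poly_bounded_on_bounded[of _ _ "\<bar>c\<bar>"]) auto

lemma poly_bounded_on_norm: "poly_bounded_on S (\<lambda>\<tau> x. norm x)"
  unfolding poly_bounded_on_def by (rule exI[of _ 1], rule exI[of _ 1]) auto

lemma poly_bounded_onE: 
  assumes "poly_bounded_on S f" obtains C k where "C \<ge> 0" "\<And>\<tau> x. \<tau> \<in> S \<Longrightarrow> \<bar>f \<tau> x\<bar> \<le> C * (1 + norm x) ^ k"
proof -
  from assms obtain C k where h: "\<forall>\<tau>\<in>S. \<forall>x. \<bar>f \<tau> x\<bar> \<le> C * (1 + norm x) ^ k" unfolding poly_bounded_on_def by blast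
  have "\<bar>f \<tau> x\<bar> \<le> \<bar>C\<bar> * (1 + norm x) ^ k" if "\<tau> \<in> S" for \<tau> x
    by (rule order_trans[OF h[rule_format, OF that]]) (intro mult_right_mono; simp)
  then show ?thesis using that[of "\<bar>C\<bar>" k] by auto
qed

lemma poly_bounded_on_add:
  assumes "poly_bounded_on S f" "poly_bounded_on S g" shows "poly_bounded_on S (\<lambda>\<tau> x. f \<tau> x + g \<tau> x)"
proof -
  obtain C1 k1 where C1: "C1 \<ge> 0" "\<And>\<tau> x. \<tau> \<in> S \<Longrightarrow> \<bar>f \<tau> x\<bar> \<le> C1 * (1 + norm x) ^ k1"
    using assms(1) by (rule poly_bounded_onE) blast
  obtain C2 k2 where C2: "C2 \<ge> 0" "\<And>\<tau> x. \<tau> \<in> S \<Longrightarrow> \<bar>g \<tau> x\<bar> \<le> C2 * (1 + norm x) ^ k2"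
    using assms(2) by (rule poly_bounded_onE) blast
  have "\<bar>f \<tau> x + g \<tau> x\<bar> \<le> (C1 + C2) * (1 + norm x) ^ (k1 + k2)" if "\<tau> \<in> S" for \<tau> x
  proof -
    have a: "(1 + norm x) ^ k1 \<le> (1 + norm x) ^ (k1 + k2)" by (intro power_increasing) auto
    have b: "(1 + norm x) ^ k2 \<le> (1 + norm x) ^ (k1 + k2)" by (intro power_increasing) auto
    have "\<bar>f \<tau> x + g \<tau> x\<bar> \<le> C1 * (1 + norm x) ^ k1 + C2 * (1 + norm x) ^ k2"
      using C1(2)[OF that, of x] C2(2)[OF that, of x] by linarith
    also have "\<dots> \<le> C1 * (1 + norm x) ^ (k1 + k2) + C2 * (1 + norm x) ^ (k1 + k2)"
      using a b C1(1) C2(1) by (intro add_mono mult_left_mono) auto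
    finally show ?thesis by (simp add: algebra_simps)
  qed
  then show ?thesis unfolding poly_bounded_on_def by blast
qed

lemma poly_bounded_on_mult:
  assumes "poly_bounded_on S f" "poly_bounded_on S g" shows "poly_bounded_on S (\<lambda>\<tau> x. f \<tau> x * g \<tau> x)"
proof -
  obtain C1 k1 where C1: "C1 \<ge> 0" "\<And>\<tau> x. \<tau> \<in> S \<Longrightarrow> \<bar>f \<tau> x\<bar> \<le> C1 * (1 + norm x) ^ k1"
    using assms(1) by (rule poly_bounded_onE) blast
  obtain C2 k2 where C2: "C2 \<ge> 0" "\<And>\<tau> x. \<tau> \<in> S \<Longrightarrow> \<bar>g \<tau> x\<bar> \<le> C2 * (1 + norm x) ^ k2"
    using assms(2) by (rule poly_bounded_onE) blast
  have "\<bar>f \<tau> x * g \<tau> x\<bar> \<le> (C1 * C2) * (1 + norm x) ^ (k1 + k2)" if "\<tau> \<in> S" for \<tau> x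
  proof -
    have "\<bar>f \<tau> x * g \<tau> x\<bar> = \<bar>f \<tau> x\<bar> * \<bar>g \<tau> x\<bar>" by (simp add: abs_mult)
    also have "\<dots> \<le> (C1 * (1 + norm x) ^ k1) * (C2 * (1 + norm x) ^ k2)"
      using C1(2)[OF that, of x] C2(2)[OF that, of x] by (intro mult_mono) auto
    finally show ?thesis by (simp add: algebra_simps power_add)
  qed
  then show ?thesis unfolding poly_bounded_on_def by blast
qed

lemma poly_bounded_on_uminus: "poly_bounded_on S f \<Longrightarrow> poly_bounded_on S (\<lambda>\<tau> x. - f \<tau> x)"
  by (erule poly_bounded_on_le) auto

lemma poly_bounded_on_diff:
  "poly_bounded_on S f \<Longrightarrow> poly_bounded_on S g \<Longrightarrow> poly_bounded_on S (\<lambda>\<tau> x. f \<tau> x - g \<tau> x)"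
  using poly_bounded_on_add[OF _ poly_bounded_on_uminus[of S g]] by simp

lemma poly_bounded_on_sum:
  assumes "finite A" "\<And>j. j \<in> A \<Longrightarrow> poly_bounded_on S (f j)" shows "poly_bounded_on S (\<lambda>\<tau> x. \<Sum>j\<in>A. f j \<tau> x)"
  using assms
proof (induction A rule: finite_induct)
  case empty then show ?case by simp
next
  case (insert a A) then show ?case by (simp add: poly_bounded_on_add)
qed

lemma poly_bounded_on_vec_nth: "poly_bounded_on S (\<lambda>\<tau> (x::real^'n). x $ i)"
  by (rule poly_bounded_on_le[OF poly_bounded_on_norm]) (simp add: component_le_norm_cart)

lemma gauss_bounded_onE:
  assumes "gauss_bounded_on S f" obtains C c where "C \<ge> 0" "c > 0" "\<And>\<tau> x. \<tau> \<in> S \<Longrightarrow> \<bar>f \<tau> x\<bar> \<le> C * exp (- c * (norm x)\<^sup>2)"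
proof -
  from assms obtain C c where c: "c > 0" and h: "\<forall>\<tau>\<in>S. \<forall>x. \<bar>f \<tau> x\<bar> \<le> C * exp (- c * (norm x)\<^sup>2)" unfolding gauss_bounded_on_def by blast
  have "\<bar>f \<tau> x\<bar> \<le> \<bar>C\<bar> * exp (- c * (norm x)\<^sup>2)" if "\<tau> \<in> S" for \<tau> x
    by (rule order_trans[OF h[rule_format, OF that]]) (intro mult_right_mono; simp)
  then show ?thesis using that[of "\<bar>C\<bar>" c] c by auto
qed

lemma gauss_bounded_on_mult_poly:
  assumes "gauss_bounded_on S f" "poly_bounded_on S g" shows "gauss_bounded_on S (\<lambda>\<tau> x. f \<tau> x * g \<tau> x)"
proof -
  obtain C1 c where C1: "C1 \<ge> 0" "c > 0" "\<And>\<tau> x. \<tau> \<in> S \<Longrightarrow> \<bar>f \<tau> x\<bar> \<le> C1 * exp (- c * (norm x)\<^sup>2)"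
    using assms(1) by (rule gauss_bounded_onE) blast
  obtain C2 k where C2: "C2 \<ge> 0" "\<And>\<tau> x. \<tau> \<in> S \<Longrightarrow> \<bar>g \<tau> x\<bar> \<le> C2 * (1 + norm x) ^ k"
    using assms(2) by (rule poly_bounded_onE) blast
  have "\<bar>f \<tau> x * g \<tau> x\<bar> \<le> (C1 * C2 * exp ((real k)\<^sup>2 / (2 * c))) * exp (- (c/2) * (norm x)\<^sup>2)" if "\<tau> \<in> S" for \<tau> x
  proof -
    have "\<bar>f \<tau> x * g \<tau> x\<bar> = \<bar>f \<tau> x\<bar> * \<bar>g \<tau> x\<bar>" by (simp add: abs_mult)
    also have "\<dots> \<le> (C1 * exp (- c * (norm x)\<^sup>2)) * (C2 * (1 + norm x) ^ k)"
      using C1(3)[OF that, of x] C2(2)[OF that, of x] C1(1) by (intro mult_mono) auto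
    also have "\<dots> = (C1 * C2) * ((1 + norm x) ^ k * exp (- c * (norm x)\<^sup>2))" by (simp add: algebra_simps)
    also have "\<dots> \<le> (C1 * C2) * (exp ((real k)\<^sup>2 / (2 * c)) * exp (- (c/2) * (norm x)\<^sup>2))"
      using C1 C2 by (intro mult_left_mono poly_mult_exp_minus_square_le) auto
    finally show ?thesis by (simp add: algebra_simps)
  qed
  moreover have "c/2 > 0" using C1 by simp
  ultimately show ?thesis unfolding gauss_bounded_on_def by blast
qed

lemma gauss_bounded_on_add:
  assumes "gauss_bounded_on S f" "gauss_bounded_on S g" shows "gauss_bounded_on S (\<lambda>\<tau> x. f \<tau> x + g \<tau> x)"
proof -
  obtain C1 c1 where C1: "C1 \<ge> 0" "c1 > 0" "\<And>\<tau> x. \<tau> \<in> S \<Longrightarrow> \<bar>f \<tau> x\<bar> \<le> C1 * exp (- c1 * (norm x)\<^sup>2)"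
    using assms(1) by (rule gauss_bounded_onE) blast
  obtain C2 c2 where C2: "C2 \<ge> 0" "c2 > 0" "\<And>\<tau> x. \<tau> \<in> S \<Longrightarrow> \<bar>g \<tau> x\<bar> \<le> C2 * exp (- c2 * (norm x)\<^sup>2)"
    using assms(2) by (rule gauss_bounded_onE) blast
  define c where "c = min c1 c2"
  have "\<bar>f \<tau> x + g \<tau> x\<bar> \<le> (C1 + C2) * exp (- c * (norm x)\<^sup>2)" if "\<tau> \<in> S" for \<tau> x
  proof -
    have a: "exp (- c1 * (norm x)\<^sup>2) \<le> exp (- c * (norm x)\<^sup>2)"
      by (simp add: c_def mult_right_mono)
    have b: "exp (- c2 * (norm x)\<^sup>2) \<le> exp (- c * (norm x)\<^sup>2)"
      by (simp add: c_def mult_right_mono)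
    have "\<bar>f \<tau> x + g \<tau> x\<bar> \<le> C1 * exp (- c1 * (norm x)\<^sup>2) + C2 * exp (- c2 * (norm x)\<^sup>2)"
      using C1(3)[OF that, of x] C2(3)[OF that, of x] by linarith
    also have "\<dots> \<le> C1 * exp (- c * (norm x)\<^sup>2) + C2 * exp (- c * (norm x)\<^sup>2)"
      using a b C1(1) C2(1) by (intro add_mono mult_left_mono) auto
    finally show ?thesis by (simp add: algebra_simps)
  qed
  moreover have "c > 0" using C1 C2 by (simp add: c_def)
  ultimately show ?thesis unfolding gauss_bounded_on_def by blast
qed

lemma gauss_bounded_on_uminus: "gauss_bounded_on S f \<Longrightarrow> gauss_bounded_on S (\<lambda>\<tau> x. - f \<tau> x)"
  by (erule gauss_bounded_on_le) auto

lemma gauss_bounded_on_sum: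
  assumes "finite A" "\<And>j. j \<in> A \<Longrightarrow> gauss_bounded_on S (f j)" shows "gauss_bounded_on S (\<lambda>\<tau> x. \<Sum>j\<in>A. f j \<tau> x)"
  using assms
proof (induction A rule: finite_induct)
  case empty then show ?case unfolding gauss_bounded_on_def by (intro exI[of _ 0] exI[of _ 1]) auto
next
  case (insert a A) then show ?case by (simp add: gauss_bounded_on_add)
qed

lemma gauss_bounded_on_dominated:
  assumes "gauss_bounded_on S f"
  obtains G :: "'a::euclidean_space \<Rightarrow> real" where "integrable lborel G" "\<And>\<tau> x. \<tau> \<in> S \<Longrightarrow> \<bar>f \<tau> x\<bar> \<le> G x"
proof -
  obtain C c where C: "C \<ge> 0" "c > 0" "\<And>\<tau> x. \<tau> \<in> S \<Longrightarrow> \<bar>f \<tau> x\<bar> \<le> C * exp (- c * (norm x)\<^sup>2)"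
    using assms by (rule gauss_bounded_onE) blast
  have "integrable lborel (\<lambda>x::'a. C * exp (- c * (norm x)\<^sup>2))"
    using integrable_exp_minus_norm_square[OF C(2)] by (rule integrable_mult_right)
  then show ?thesis using that C(3) by blast
qed

lemma gauss_bounded_on_integrable:
  assumes "gauss_bounded_on S f" "\<tau> \<in> S" "f \<tau> \<in> borel_measurable (lborel::'a::euclidean_space measure)"
  shows "integrable lborel (f \<tau>)"
proof -
  obtain G :: "'a \<Rightarrow> real" where G: "integrable lborel G" "\<And>\<tau> x. \<tau> \<in> S \<Longrightarrow> \<bar>f \<tau> x\<bar> \<le> G x"
    using assms(1) by (rule gauss_bounded_on_dominated) blast
  show ?thesis
    by (rule Bochner_Integration.integrable_bound[OF G(1) assms(3)]) (use G(2)[OF assms(2)] in \<open>auto intro: order_trans[OF _ abs_ge_self]\<close>)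
qed

lemma poly_bounded_on_cong: "poly_bounded_on S g \<Longrightarrow> (\<And>\<tau> x. \<tau> \<in> S \<Longrightarrow> f \<tau> x = g \<tau> x) \<Longrightarrow> poly_bounded_on S f"
  by (erule poly_bounded_on_le) simp

lemma gauss_bounded_on_cong: "gauss_bounded_on S g \<Longrightarrow> (\<And>\<tau> x. \<tau> \<in> S \<Longrightarrow> f \<tau> x = g \<tau> x) \<Longrightarrow> gauss_bounded_on S f"
  by (erule gauss_bounded_on_le) simp

lemma gauss_bounded_imp_on: "gauss_bounded f \<Longrightarrow> T \<ge> 0 \<Longrightarrow> gauss_bounded_on {0..T} f"
  unfolding gauss_bounded_def gauss_bounded_on_def by auto

lemma poly_bounded_imp_on: "poly_bounded f \<Longrightarrow> T \<ge> 0 \<Longrightarrow> poly_bounded_on {0..T} f"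
  unfolding poly_bounded_def poly_bounded_on_def by auto

section \<open>Differentiation under the integral sign\<close>

lemma has_real_derivative_integral_dominated:
  fixes f g :: "real \<Rightarrow> 'a::euclidean_space \<Rightarrow> real" and I :: "real set" and G :: "'a \<Rightarrow> real"
  assumes I: "convex I" "t \<in> I"
    and der: "\<And>\<tau> x. \<tau> \<in> I \<Longrightarrow> ((\<lambda>\<sigma>. f \<sigma> x) has_real_derivative g \<tau> x) (at \<tau> within I)"
    and fi: "\<And>\<tau>. \<tau> \<in> I \<Longrightarrow> integrable lborel (f \<tau>)"
    and gm: "g t \<in> borel_measurable lborel"
    and G: "integrable lborel G" "\<And>\<tau> x. \<tau> \<in> I \<Longrightarrow> \<bar>g \<tau> x\<bar> \<le> G x"
  shows "((\<lambda>\<sigma>. integral\<^sup>L lborel (f \<sigma>)) has_real_derivative integral\<^sup>L lborel (g t)) (at t within I)"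
  unfolding has_field_derivative_iff tendsto_at_iff_sequentially
proof (intro allI impI)
  fix X :: "nat \<Rightarrow> real" assume X: "\<forall>i. X i \<in> I - {t}" "X \<longlonglongrightarrow> t"
  define q where "q n x = (f (X n) x - f t x) / (X n - t)" for n x
  have XI: "X n \<in> I" "X n \<noteq> t" for n using X(1) by auto
  have eq: "(integral\<^sup>L lborel (f (X n)) - integral\<^sup>L lborel (f t)) / (X n - t) = integral\<^sup>L lborel (q n)" for n
    unfolding q_def using fi[OF XI(1)] fi[OF I(2)]
    by (simp add: integral_diff[symmetric])
  have qm: "q n \<in> borel_measurable lborel" for n
    unfolding q_def using fi[OF XI(1)] fi[OF I(2)] by measurable
  have lim: "(\<lambda>n. q n x) \<longlonglongrightarrow> g t x" for x
  proof -
    have "((\<lambda>y. (f y x - f t x) / (y - t)) \<longlongrightarrow> g t x) (at t within I)"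
      using der[OF I(2), of x] unfolding has_field_derivative_iff .
    then have "((\<lambda>y. (f y x - f t x) / (y - t)) \<circ> X) \<longlonglongrightarrow> g t x"
      unfolding tendsto_at_iff_sequentially using X by blast
    then show ?thesis by (simp add: q_def comp_def)
  qed
  have bnd: "norm (q n x) \<le> G x" for n x
  proof -
    have d: "((\<lambda>\<sigma>. f \<sigma> x) has_derivative (\<lambda>h. g \<tau> x * h)) (at \<tau> within I)" if "\<tau> \<in> I" for \<tau>
      using der[OF that, of x] by (simp add: has_field_derivative_def)
    have o: "onorm (\<lambda>h. g \<tau> x * h) \<le> G x" if "\<tau> \<in> I" for \<tau>
    proof -
      have "onorm (\<lambda>h. g \<tau> x * h) \<le> \<bar>g \<tau> x\<bar>" by (rule onorm_le) (simp add: abs_mult)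
      then show ?thesis using G(2)[OF that, of x] by linarith
    qed
    have "norm (f (X n) x - f t x) \<le> G x * norm (X n - t)"
      by (rule differentiable_bound[OF I(1) d o XI(1) I(2)])
    then show ?thesis using XI(2)[of n] unfolding q_def
      by (simp add: divide_le_eq abs_divide)
  qed
  have "(\<lambda>n. integral\<^sup>L lborel (q n)) \<longlonglongrightarrow> integral\<^sup>L lborel (g t)"
    by (rule integral_dominated_convergence[OF gm qm G(1)]) (use lim bnd in auto)
  then show "((\<lambda>y. (integral\<^sup>L lborel (f y) - integral\<^sup>L lborel (f t)) / (y - t)) \<circ> X) \<longlonglongrightarrow> integral\<^sup>L lborel (g t)"
    using eq by (simp add: comp_def)
qed

lemma has_real_derivative_translate:
  assumes der: "\<And>x. (h has_derivative h' x) (at x)"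
  shows "((\<lambda>\<sigma>. h (\<sigma> *\<^sub>R e + x)) has_real_derivative h' (\<tau> *\<^sub>R e + x) e) (at \<tau>)"
proof -
  have "((\<lambda>\<sigma>::real. \<sigma> *\<^sub>R e + x) has_derivative (\<lambda>\<sigma>. \<sigma> *\<^sub>R e)) (at \<tau>)"
    by (auto intro!: derivative_eq_intros)
  then have "((\<lambda>\<sigma>. h (\<sigma> *\<^sub>R e + x)) has_derivative (\<lambda>\<sigma>. h' (\<tau> *\<^sub>R e + x) (\<sigma> *\<^sub>R e))) (at \<tau>)"
    using has_derivative_compose[OF _ der] by blast
  moreover have "(\<lambda>\<sigma>. h' (\<tau> *\<^sub>R e + x) (\<sigma> *\<^sub>R e)) = (*) (h' (\<tau> *\<^sub>R e + x) e)"
    using linear_scale[OF has_derivative_linear[OF der]] by (auto simp: mult.commute)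
  ultimately show ?thesis unfolding has_field_derivative_def by simp
qed

lemma borel_measurable_directional_derivative:
  fixes f :: "'a::euclidean_space \<Rightarrow> real"
  assumes der: "\<And>x. (f has_derivative f' x) (at x)"
  shows "(\<lambda>x. f' x v) \<in> borel_measurable borel"
proof (rule borel_measurable_LIMSEQ_real)
  have cont: "continuous_on UNIV f"
    using der by (meson continuous_at_imp_continuous_on has_derivative_continuous)
  show "(\<lambda>x. (f (x + (1 / Suc n) *\<^sub>R v) - f x) / (1 / Suc n)) \<in> borel_measurable borel" for n
  proof -
    have c2: "continuous_on UNIV (\<lambda>x. f (x + c))" for c
      by (rule continuous_on_compose2[OF cont]) (auto intro: continuous_intros)
    show ?thesis using cont c2 by (intro borel_measurable_continuous_onI continuous_intros) auto
  qed
  fix x :: 'a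
  have "((\<lambda>s. f (s *\<^sub>R v + x)) has_real_derivative f' x v) (at 0)"
    using has_real_derivative_translate[OF der, of v x 0] by simp
  then have "((\<lambda>s. (f (x + s *\<^sub>R v) - f x) / s) \<longlongrightarrow> f' x v) (at 0)"
    unfolding has_field_derivative_iff by (simp add: add.commute)
  moreover have "(\<lambda>n. 1 / real (Suc n)) \<longlonglongrightarrow> 0" by (rule LIMSEQ_Suc[OF lim_const_over_n])
  ultimately have "((\<lambda>s. (f (x + s *\<^sub>R v) - f x) / s) \<circ> (\<lambda>n. 1 / real (Suc n))) \<longlonglongrightarrow> f' x v"
    unfolding tendsto_at_iff_sequentially by (simp add: at_within_def[symmetric])
  then show "(\<lambda>n. (f (x + (1 / Suc n) *\<^sub>R v) - f x) / (1 / Suc n)) \<longlonglongrightarrow> f' x v"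
    by (simp add: comp_def)
qed

lemma lborel_translate:
  fixes h :: "'a::euclidean_space \<Rightarrow> real"
  assumes hint: "integrable lborel h"
  shows "integrable lborel (\<lambda>x. h (c + x))" "integral\<^sup>L lborel (\<lambda>x. h (c + x)) = integral\<^sup>L lborel h"
proof -
  have hm: "h \<in> borel_measurable borel" using borel_measurable_integrable[OF hint] by simp
  have m: "(+) c \<in> measurable lborel borel" by simp
  show "integrable lborel (\<lambda>x. h (c + x))"
    using integrable_distr_eq[OF m hm] hint lborel_distr_plus[of c] by simp
  show "integral\<^sup>L lborel (\<lambda>x. h (c + x)) = integral\<^sup>L lborel h"
    using integral_distr[OF m hm] lborel_distr_plus[of c] by simp
qed

lemma gauss_bounded_on_translate:
  fixes f :: "'a::real_normed_vector \<Rightarrow> real"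
  assumes "gauss_bounded_on (UNIV::unit set) (\<lambda>_. f)"
  shows "gauss_bounded_on {-1..1} (\<lambda>\<sigma> x. f (\<sigma> *\<^sub>R e + x))"
proof -
  obtain C c where C: "C \<ge> 0" "c > 0" "\<And>x. \<bar>f x\<bar> \<le> C * exp (- c * (norm x)\<^sup>2)"
    using assms by (rule gauss_bounded_onE) auto
  have "\<bar>f (\<sigma> *\<^sub>R e + x)\<bar> \<le> (C * exp (c * (norm e)\<^sup>2)) * exp (- (c/2) * (norm x)\<^sup>2)"
    if "\<sigma> \<in> {-1..1}" for \<sigma> x
  proof -
    have "\<bar>f (\<sigma> *\<^sub>R e + x)\<bar> \<le> C * exp (- c * (norm (x + \<sigma> *\<^sub>R e))\<^sup>2)"
      using C(3)[of "\<sigma> *\<^sub>R e + x"] by (simp add: add.commute)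
    also have "\<dots> \<le> C * (exp (c * (norm (\<sigma> *\<^sub>R e))\<^sup>2) * exp (- (c/2) * (norm x)\<^sup>2))"
      using C by (intro mult_left_mono exp_minus_norm_square_translate_le) auto
    also have "\<dots> \<le> C * (exp (c * (norm e)\<^sup>2) * exp (- (c/2) * (norm x)\<^sup>2))"
    proof -
      have "norm (\<sigma> *\<^sub>R e) \<le> norm e" using that by (auto intro: mult_left_le_one_le)
      then have "(norm (\<sigma> *\<^sub>R e))\<^sup>2 \<le> (norm e)\<^sup>2" by (intro power_mono) auto
      then show ?thesis using C by (intro mult_left_mono mult_right_mono) auto
    qed
    finally show ?thesis by (simp add: mult.assoc)
  qed
  moreover have "c/2 > 0" using C by simp
  ultimately show ?thesis unfolding gauss_bounded_on_def by blast
qed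

text \<open>The integral of \<open>h (\<sigma> e + x)\<close> over \<open>x\<close> does not depend on \<open>\<sigma>\<close>; differentiate it at \<open>\<sigma> = 0\<close>.\<close>

lemma integral_directional_derivative_eq_0:
  fixes h :: "'a::euclidean_space \<Rightarrow> real"
  assumes der: "\<And>x. (h has_derivative h' x) (at x)"
    and h: "integrable lborel h"
    and gb: "gauss_bounded_on (UNIV::unit set) (\<lambda>_ x. h' x e)"
  shows "integral\<^sup>L lborel (\<lambda>x. h' x e) = 0"
proof -
  define I :: "real set" where "I = {-1..1}"
  obtain G :: "'a \<Rightarrow> real" where G: "integrable lborel G" "\<And>\<sigma> x. \<sigma> \<in> I \<Longrightarrow> \<bar>h' (\<sigma> *\<^sub>R e + x) e\<bar> \<le> G x"
    using gauss_bounded_on_translate[OF gb] unfolding I_def by (rule gauss_bounded_on_dominated) blast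
  have "((\<lambda>\<sigma>. integral\<^sup>L lborel (\<lambda>x. h (\<sigma> *\<^sub>R e + x))) has_real_derivative
      integral\<^sup>L lborel (\<lambda>x. h' (0 *\<^sub>R e + x) e)) (at 0 within I)"
  proof (rule has_real_derivative_integral_dominated[OF _ _ _ _ _ G])
    show "((\<lambda>\<sigma>. h (\<sigma> *\<^sub>R e + x)) has_real_derivative h' (\<tau> *\<^sub>R e + x) e) (at \<tau> within I)" for \<tau> x
      using has_real_derivative_translate[OF der] by (rule has_field_derivative_at_within)
    show "integrable lborel (\<lambda>x. h (\<sigma> *\<^sub>R e + x))" for \<sigma>
      by (rule lborel_translate(1)[OF h])
    show "(\<lambda>x. h' (0 *\<^sub>R e + x) e) \<in> borel_measurable lborel"
      using borel_measurable_directional_derivative[OF der, of e] by simp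
  qed (auto simp: I_def)
  moreover have "at (0::real) within I = at 0"
    by (rule at_within_interior) (simp add: I_def)
  moreover have "((\<lambda>\<sigma>. integral\<^sup>L lborel (\<lambda>x. h (\<sigma> *\<^sub>R e + x))) has_real_derivative 0) (at 0)"
    by (simp add: lborel_translate(2)[OF h])
  ultimately show ?thesis using DERIV_unique by fastforce
qed

lemma at_within_Icc_eq_atLeast: "(t::real) \<ge> 0 \<Longrightarrow> at t within {0..t+1} = at t within {0..}"
  by (rule at_within_nhd[where S="{..<t+1}"]) auto

lemma has_real_derivative_integral_atLeast:
  fixes f g :: "real \<Rightarrow> 'a::euclidean_space \<Rightarrow> real"
  assumes t: "t \<ge> 0"
    and der: "\<And>\<tau> x. \<tau> \<ge> 0 \<Longrightarrow> ((\<lambda>\<sigma>. f \<sigma> x) has_real_derivative g \<tau> x) (at \<tau> within {0..})"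
    and f: "\<And>\<tau>. \<tau> \<ge> 0 \<Longrightarrow> integrable lborel (f \<tau>)"
    and g: "gauss_bounded_on {0..t+1} g" "g t \<in> borel_measurable lborel"
  shows "((\<lambda>\<sigma>. integral\<^sup>L lborel (f \<sigma>)) has_real_derivative integral\<^sup>L lborel (g t)) (at t within {0..})"
proof -
  obtain G :: "'a \<Rightarrow> real" where G: "integrable lborel G" "\<And>\<tau> x. \<tau> \<in> {0..t+1} \<Longrightarrow> \<bar>g \<tau> x\<bar> \<le> G x"
    using g(1) by (rule gauss_bounded_on_dominated) blast
  have "((\<lambda>\<sigma>. integral\<^sup>L lborel (f \<sigma>)) has_real_derivative integral\<^sup>L lborel (g t)) (at t within {0..t+1})"
  proof (rule has_real_derivative_integral_dominated[where f=f and g=g and G=G])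
    show "((\<lambda>\<sigma>. f \<sigma> x) has_real_derivative g \<tau> x) (at \<tau> within {0..t+1})" if "\<tau> \<in> {0..t+1}" for \<tau> x
      by (rule DERIV_subset[OF der]) (use that in auto)
  qed (use t f g(2) G in auto)
  then show ?thesis using at_within_Icc_eq_atLeast[OF t] by simp
qed

lemma has_derivative_zero_imp_const:
  fixes f :: "real \<Rightarrow> real"
  assumes "\<And>\<tau>. \<tau> \<ge> 0 \<Longrightarrow> (f has_real_derivative 0) (at \<tau> within {0..})" "\<tau> \<ge> 0"
  shows "f \<tau> = f 0"
proof -
  have "\<exists>c. \<forall>x\<in>{0..}. f x = c"
    by (rule has_derivative_zero_constant[of "{0::real..}"])
       (use assms(1) in \<open>auto simp: has_field_derivative_def mult_zero_left[abs_def]\<close>)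
  then show ?thesis using assms(2) by force
qed

lemma has_derivative_vec_nth[derivative_intros]:
  "(f has_derivative f') F \<Longrightarrow> ((\<lambda>x. f x $ i) has_derivative (\<lambda>h. f' h $ i)) F"
  by (rule bounded_linear.has_derivative[OF bounded_linear_vec_nth])

lemma has_derivative_vec_lambda:
  fixes f :: "'a::real_normed_vector \<Rightarrow> 'n::finite \<Rightarrow> real"
  assumes "\<And>i. ((\<lambda>x. f x i) has_derivative (\<lambda>h. f' h i)) F"
  shows "((\<lambda>x. \<chi> i. f x i) has_derivative (\<lambda>h. \<chi> i. f' h i)) F"
proof -
  have "((\<lambda>x. \<Sum>i\<in>UNIV. f x i *\<^sub>R axis i 1) has_derivative (\<lambda>h. \<Sum>i\<in>UNIV. f' h i *\<^sub>R axis i (1::real))) F"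
    using assms by (intro has_derivative_sum has_derivative_scaleR_left) auto
  moreover have "(\<chi> i. g i) = (\<Sum>i\<in>UNIV. g i *\<^sub>R axis i (1::real))" for g :: "'n \<Rightarrow> real"
    by (simp add: vec_eq_iff axis_def if_distrib cong: if_cong)
  ultimately show ?thesis by simp
qed

definition partial :: "(real^'d \<Rightarrow> real) \<Rightarrow> real^'d \<Rightarrow> 'd \<Rightarrow> real" where
  "partial f x i = frechet_derivative f (at x) (axis i 1)"

lemma partial_eq_derivative: "(f has_derivative f') (at x) \<Longrightarrow> partial f x i = f' (axis i 1)"
  unfolding partial_def using frechet_derivative_at by metis

lemma has_frechet_derivative_at:
  "f differentiable (at x) \<Longrightarrow> (f has_derivative frechet_derivative f (at x)) (at x)"
  by (simp add: frechet_derivative_works)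

lemma partial_add:
  assumes "f differentiable (at x)" "g differentiable (at x)"
  shows "partial (\<lambda>y. f y + g y) x i = partial f x i + partial g x i"
  using partial_eq_derivative[OF has_derivative_add[OF has_frechet_derivative_at[OF assms(1)] has_frechet_derivative_at[OF assms(2)]], of i]
  by (simp add: partial_def)

lemma partial_mult:
  assumes "f differentiable (at x)" "g differentiable (at x)"
  shows "partial (\<lambda>y. f y * g y) x i = partial f x i * g x + f x * partial g x i"
  using partial_eq_derivative[OF has_derivative_mult[OF has_frechet_derivative_at[OF assms(1)] has_frechet_derivative_at[OF assms(2)]], of i]
  by (simp add: partial_def)

lemma partial_const: "partial (\<lambda>y. c) x i = 0"
  by (subst partial_eq_derivative[OF has_derivative_const]) simp

lemma partial_coord: "partial (\<lambda>y::real^'d. y $ j) x i = (if i = j then 1 else 0)"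
  by (subst partial_eq_derivative[OF has_derivative_vec_nth[OF has_derivative_ident]]) (simp add: axis_def)

lemma partial_sum_finite:
  assumes "finite A" "\<And>j. j \<in> A \<Longrightarrow> f j differentiable (at x)"
  shows "partial (\<lambda>y. \<Sum>j\<in>A. f j y) x i = (\<Sum>j\<in>A. partial (f j) x i)"
proof -
  have "((\<lambda>y. \<Sum>j\<in>A. f j y) has_derivative (\<lambda>h. \<Sum>j\<in>A. frechet_derivative (f j) (at x) h)) (at x)"
    using assms by (intro has_derivative_sum has_frechet_derivative_at) auto
  from partial_eq_derivative[OF this, of i] show ?thesis by (simp add: partial_def)
qed

lemma grad_nth_eq_partial: "grad f x $ i = partial f x i"
  by (simp add: grad_def partial_def)

lemma divg_eq_sum_partial:
  fixes F :: "real^'d \<Rightarrow> real^'d"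
  assumes "F differentiable (at x)"
  shows "divg F x = (\<Sum>i\<in>UNIV. partial (\<lambda>y. F y $ i) x i)"
proof -
  have "partial (\<lambda>y. F y $ i) x i = frechet_derivative F (at x) (axis i 1) $ i" for i
    by (rule partial_eq_derivative[OF has_derivative_vec_nth[OF has_frechet_derivative_at[OF assms]]])
  then show ?thesis by (simp add: divg_def)
qed

lemma differentiable_vec_lambda:
  fixes F :: "real^'d \<Rightarrow> real^'n"
  assumes "\<And>i. (\<lambda>y. F y $ i) differentiable (at x)"
  shows "F differentiable (at x)"
proof -
  have "((\<lambda>y. \<chi> i. F y $ i) has_derivative (\<lambda>h. \<chi> i. frechet_derivative (\<lambda>y. F y $ i) (at x) h)) (at x)"
    using assms by (intro has_derivative_vec_lambda has_frechet_derivative_at)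
  then show ?thesis by (auto intro: differentiableI)
qed

lemma differentiable_component[simp]: "(\<lambda>y::real^'d. y $ k) differentiable (at x)"
  by (rule differentiableI[OF has_derivative_vec_nth[OF has_derivative_ident]])

lemma differentiable_sum_any[simp]: "(\<And>k. k \<in> A \<Longrightarrow> f k differentiable F) \<Longrightarrow> (\<lambda>y. \<Sum>k\<in>A. f k y) differentiable F"
proof (induction A rule: infinite_finite_induct)
  case (insert a A) then show ?case by (simp add: differentiable_add)
qed simp_all

lemma partial_uminus:
  assumes "f differentiable (at x)" shows "partial (\<lambda>y. - f y) x i = - partial f x i"
  using partial_eq_derivative[OF has_derivative_minus[OF has_frechet_derivative_at[OF assms]], of i]
    by (simp add: partial_def)

lemma partial_diff:
  assumes "f differentiable (at x)" "g differentiable (at x)"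
  shows "partial (\<lambda>y. f y - g y) x i = partial f x i - partial g x i"
  using partial_eq_derivative[OF has_derivative_diff[OF has_frechet_derivative_at[OF assms(1)] has_frechet_derivative_at[OF assms(2)]], of i]
  by (simp add: partial_def)

lemma partial_sum:
  assumes "\<And>j. j \<in> A \<Longrightarrow> f j differentiable (at x)"
  shows "partial (\<lambda>y. \<Sum>j\<in>A. f j y) x i = (\<Sum>j\<in>A. partial (f j) x i)"
proof (cases "finite A")
  case True then show ?thesis using partial_sum_finite[OF True assms] by simp
next
  case False then show ?thesis by (simp add: partial_const)
qed

lemmas partial_simps = partial_add partial_diff partial_mult partial_uminus partial_const partial_coord partial_sum
  differentiable_add differentiable_diff differentiable_mult differentiable_minus differentiable_const

lemma partial_vec_nth_eq_jacobian:
  fixes F :: "real^'d \<Rightarrow> real^'n"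
  assumes "F differentiable (at x)"
  shows "partial (\<lambda>y. F y $ i) x j = jacobian F (at x) $ i $ j"
  using partial_eq_derivative[OF has_derivative_vec_nth[OF has_frechet_derivative_at[OF assms]]]
  by (simp add: jacobian_def matrix_def)

lemma differentiable_vec_nth: "F differentiable (at x) \<Longrightarrow> (\<lambda>y. F y $ i) differentiable (at x)"
  by (rule differentiableI[OF has_derivative_vec_nth[OF has_frechet_derivative_at]])

lemma indicator_mult_simps[simp]: "(if P then 1 else 0) * (a::real) = (if P then a else 0)"
  "(a::real) * (if P then 1 else 0) = (if P then a else 0)"
  "(a::real) * (if P then b else 0) = (if P then a * b else 0)"
  "(if P then b else 0) * (a::real) = (if P then b * a else 0)"
  by auto

lemma partial_eq_mult_grad_ln:
  fixes w :: "real^'d \<Rightarrow> real"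
  assumes pos: "\<And>y. w y > 0" and d: "(\<lambda>y. ln (w y)) differentiable (at x)"
  shows "w differentiable (at x)" "partial w x i = w x * grad (\<lambda>y. ln (w y)) x $ i"
proof -
  have eq: "w = (\<lambda>y. exp (ln (w y)))" using pos by auto
  have "((\<lambda>y. exp (ln (w y))) has_derivative
          (\<lambda>h. exp (ln (w x)) * frechet_derivative (\<lambda>y. ln (w y)) (at x) h)) (at x)"
    using has_derivative_exp[OF has_frechet_derivative_at[OF d]] by (simp add: mult.commute)
  then have h: "(w has_derivative (\<lambda>h. w x * frechet_derivative (\<lambda>y. ln (w y)) (at x) h)) (at x)"
    using pos[of x] by (subst eq) simp
  then show "w differentiable (at x)" by (rule differentiableI)
  show "partial w x i = w x * grad (\<lambda>y. ln (w y)) x $ i"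
    using partial_eq_derivative[OF h] by (simp add: grad_def)
qed

definition poly_growth :: "(real^'d \<Rightarrow> real) \<Rightarrow> bool" where
  "poly_growth p \<longleftrightarrow> poly_bounded_on (UNIV::unit set) (\<lambda>_ y. p y) \<and> p \<in> borel_measurable borel"

definition gauss_decay :: "(real^'d \<Rightarrow> real) \<Rightarrow> bool" where
  "gauss_decay w \<longleftrightarrow> gauss_bounded_on (UNIV::unit set) (\<lambda>_ y. w y) \<and> w \<in> borel_measurable borel"

definition wint :: "(real^'d \<Rightarrow> real) \<Rightarrow> (real^'d \<Rightarrow> real) \<Rightarrow> real" where
  "wint w p = integral\<^sup>L lborel (\<lambda>y. w y * p y)"

lemma poly_growth_const[simp]: "poly_growth (\<lambda>y. c)"
  unfolding poly_growth_def by simp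

lemma poly_growth_coord[simp]: "poly_growth (\<lambda>y. y $ k)"
  unfolding poly_growth_def by (simp add: poly_bounded_on_vec_nth)

lemma poly_growth_add[simp]: "poly_growth p \<Longrightarrow> poly_growth q \<Longrightarrow> poly_growth (\<lambda>y. p y + q y)"
  unfolding poly_growth_def by (auto intro: poly_bounded_on_add[of UNIV "\<lambda>_. p" "\<lambda>_. q", simplified])

lemma poly_growth_mult[simp]: "poly_growth p \<Longrightarrow> poly_growth q \<Longrightarrow> poly_growth (\<lambda>y. p y * q y)"
  unfolding poly_growth_def by (auto intro: poly_bounded_on_mult[of UNIV "\<lambda>_. p" "\<lambda>_. q", simplified])

lemma poly_growth_uminus[simp]: "poly_growth p \<Longrightarrow> poly_growth (\<lambda>y. - p y)"
  using poly_growth_mult[of "\<lambda>_. -1" p] by simp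

lemma poly_growth_diff[simp]: "poly_growth p \<Longrightarrow> poly_growth q \<Longrightarrow> poly_growth (\<lambda>y. p y - q y)"
  using poly_growth_add[of p "\<lambda>y. - q y"] by simp

lemma poly_growth_sum[simp]: "(\<And>k. k \<in> A \<Longrightarrow> poly_growth (f k)) \<Longrightarrow> poly_growth (\<lambda>y. \<Sum>k\<in>A. f k y)"
proof (induction A rule: infinite_finite_induct)
  case (infinite A) then show ?case by simp
next
  case empty then show ?case by simp
next
  case (insert a A) then show ?case by simp
qed

lemma integrable_gauss_decay_mult: "gauss_decay w \<Longrightarrow> poly_growth p \<Longrightarrow> integrable lborel (\<lambda>y. w y * p y)"
  unfolding gauss_decay_def poly_growth_def
  by (rule gauss_bounded_on_integrable[of UNIV "\<lambda>_ y. w y * p y" "()", simplified])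
     (auto intro: gauss_bounded_on_mult_poly[of UNIV "\<lambda>_. w" "\<lambda>_. p", simplified])

lemma poly_growth_divide[simp]: "poly_growth p \<Longrightarrow> poly_growth (\<lambda>y. p y / c)"
  using poly_growth_mult[of p "\<lambda>_. inverse c"] by (simp add: divide_inverse)

lemma wint_add[simp]:
  "gauss_decay w \<Longrightarrow> poly_growth p \<Longrightarrow> poly_growth q \<Longrightarrow> wint w (\<lambda>y. p y + q y) = wint w p + wint w q"
  unfolding wint_def
  using integrable_gauss_decay_mult[of w p] integrable_gauss_decay_mult[of w q] by (simp add: distrib_left)

lemma wint_diff[simp]:
  "gauss_decay w \<Longrightarrow> poly_growth p \<Longrightarrow> poly_growth q \<Longrightarrow> wint w (\<lambda>y. p y - q y) = wint w p - wint w q"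
  unfolding wint_def
  using integrable_gauss_decay_mult[of w p] integrable_gauss_decay_mult[of w q]
    by (simp add: right_diff_distrib)

lemma wint_uminus[simp]: "wint w (\<lambda>y. - p y) = - wint w p"
  unfolding wint_def by simp

lemma wint_cmult[simp]: "wint w (\<lambda>y. c * p y) = c * wint w p"
  unfolding wint_def by (simp add: mult.left_commute)

lemma wint_mult_cmult[simp]: "wint w (\<lambda>y. p y * (c * q y)) = c * wint w (\<lambda>y. p y * q y)"
  using wint_cmult[of w c "\<lambda>y. p y * q y"] by (simp add: mult.left_commute)

lemma wint_cmult_right[simp]: "wint w (\<lambda>y. p y * c) = wint w p * c"
  unfolding wint_def by (simp add: mult.assoc[symmetric])

lemma wint_sum[simp]:
  "gauss_decay w \<Longrightarrow> (\<And>k. k \<in> A \<Longrightarrow> poly_growth (f k)) \<Longrightarrow> wint w (\<lambda>y. \<Sum>k\<in>A. f k y) = (\<Sum>k\<in>A. wint w (f k))"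
  unfolding wint_def using integrable_gauss_decay_mult[of w] by (simp add: sum_distrib_left integral_sum)

lemma vec_integral_component:
  fixes F :: "'a \<Rightarrow> real^'n"
  assumes "\<And>i. integrable M (\<lambda>y. F y $ i)"
  shows "integrable M F" "(integral\<^sup>L M F) $ i = integral\<^sup>L M (\<lambda>y. F y $ i)"
proof -
  have eq: "F = (\<lambda>y. \<Sum>i\<in>UNIV. F y $ i *\<^sub>R axis i (1::real))"
    by (rule ext) (simp add: vec_eq_iff axis_def if_distrib cong: if_cong)
  show I: "integrable M F"
    by (subst eq) (use assms in \<open>auto intro!: integrable_sum integrable_scaleR_left\<close>)
  show "(integral\<^sup>L M F) $ i = integral\<^sup>L M (\<lambda>y. F y $ i)"
    using integral_bounded_linear[OF bounded_linear_vec_nth I, of i] by simp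
qed

lemma wint_const[simp]: "wint w (\<lambda>y. c) = c * integral\<^sup>L lborel w"
  unfolding wint_def by (simp add: mult.commute)

definition poly_smooth_on :: "real set \<Rightarrow> (real \<Rightarrow> real^'d \<Rightarrow> real) \<Rightarrow> bool" where
  "poly_smooth_on S f \<longleftrightarrow> (\<forall>\<tau>\<in>S. \<forall>x. f \<tau> differentiable (at x)) \<and>
     poly_bounded_on S f \<and> (\<forall>i. poly_bounded_on S (\<lambda>\<tau> x. partial (f \<tau>) x i))"

definition gauss_smooth_on :: "real set \<Rightarrow> (real \<Rightarrow> real^'d \<Rightarrow> real) \<Rightarrow> bool" where
  "gauss_smooth_on S f \<longleftrightarrow> (\<forall>\<tau>\<in>S. \<forall>x. f \<tau> differentiable (at x)) \<and>
     gauss_bounded_on S f \<and> (\<forall>i. gauss_bounded_on S (\<lambda>\<tau> x. partial (f \<tau>) x i))"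

abbreviation poly_smooth :: "(real^'d \<Rightarrow> real) \<Rightarrow> bool" where
  "poly_smooth p \<equiv> poly_smooth_on {0} (\<lambda>_. p)"

abbreviation gauss_smooth :: "(real^'d \<Rightarrow> real) \<Rightarrow> bool" where
  "gauss_smooth w \<equiv> gauss_smooth_on {0} (\<lambda>_. w)"

lemma poly_smooth_on_add:
  assumes "poly_smooth_on S f" "poly_smooth_on S g"
  shows "poly_smooth_on S (\<lambda>\<tau> x. f \<tau> x + g \<tau> x)"
proof -
  have d: "\<forall>\<tau>\<in>S. \<forall>x. f \<tau> differentiable (at x)" "\<forall>\<tau>\<in>S. \<forall>x. g \<tau> differentiable (at x)"
    using assms unfolding poly_smooth_on_def by auto
  show ?thesis unfolding poly_smooth_on_def
  proof (intro conjI allI ballI)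
    show "(\<lambda>y. f \<tau> y + g \<tau> y) differentiable (at x)" if "\<tau> \<in> S" for \<tau> x
      using d that by (auto intro: differentiable_add)
    show "poly_bounded_on S (\<lambda>\<tau> x. f \<tau> x + g \<tau> x)"
      using assms unfolding poly_smooth_on_def by (auto intro: poly_bounded_on_add)
    show "poly_bounded_on S (\<lambda>\<tau> x. partial (\<lambda>x. f \<tau> x + g \<tau> x) x i)" for i
      by (rule poly_bounded_on_cong[OF poly_bounded_on_add[of S "\<lambda>\<tau> x. partial (f \<tau>) x i" "\<lambda>\<tau> x. partial (g \<tau>) x i"]])
         (use assms d in \<open>auto simp: poly_smooth_on_def partial_add\<close>)
  qed
qed

lemma poly_smooth_on_mult:
  assumes "poly_smooth_on S f" "poly_smooth_on S g"
  shows "poly_smooth_on S (\<lambda>\<tau> x. f \<tau> x * g \<tau> x)"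
proof -
  have d: "\<forall>\<tau>\<in>S. \<forall>x. f \<tau> differentiable (at x)" "\<forall>\<tau>\<in>S. \<forall>x. g \<tau> differentiable (at x)"
    using assms unfolding poly_smooth_on_def by auto
  show ?thesis unfolding poly_smooth_on_def
  proof (intro conjI allI ballI)
    show "(\<lambda>y. f \<tau> y * g \<tau> y) differentiable (at x)" if "\<tau> \<in> S" for \<tau> x
      using d that by (auto intro: differentiable_mult)
    show "poly_bounded_on S (\<lambda>\<tau> x. f \<tau> x * g \<tau> x)"
      using assms unfolding poly_smooth_on_def by (auto intro: poly_bounded_on_mult)
    show "poly_bounded_on S (\<lambda>\<tau> x. partial (\<lambda>x. f \<tau> x * g \<tau> x) x i)" for i
      by (rule poly_bounded_on_cong[OF poly_bounded_on_add[OF poly_bounded_on_mult[of S "\<lambda>\<tau> x. partial (f \<tau>) x i" "g"] poly_bounded_on_mult[of S f "\<lambda>\<tau> x. partial (g \<tau>) x i"]]])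
         (use assms d in \<open>auto simp: poly_smooth_on_def partial_mult\<close>)
  qed
qed

lemma gauss_smooth_on_mult_poly:
  assumes "gauss_smooth_on S f" "poly_smooth_on S g"
  shows "gauss_smooth_on S (\<lambda>\<tau> x. f \<tau> x * g \<tau> x)"
proof -
  have d: "\<forall>\<tau>\<in>S. \<forall>x. f \<tau> differentiable (at x)" "\<forall>\<tau>\<in>S. \<forall>x. g \<tau> differentiable (at x)"
    using assms unfolding poly_smooth_on_def gauss_smooth_on_def by auto
  show ?thesis unfolding gauss_smooth_on_def
  proof (intro conjI allI ballI)
    show "(\<lambda>y. f \<tau> y * g \<tau> y) differentiable (at x)" if "\<tau> \<in> S" for \<tau> x
      using d that by (auto intro: differentiable_mult)
    show "gauss_bounded_on S (\<lambda>\<tau> x. f \<tau> x * g \<tau> x)"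
      using assms unfolding poly_smooth_on_def gauss_smooth_on_def by (auto intro: gauss_bounded_on_mult_poly)
    show "gauss_bounded_on S (\<lambda>\<tau> x. partial (\<lambda>x. f \<tau> x * g \<tau> x) x i)" for i
      by (rule gauss_bounded_on_cong[OF gauss_bounded_on_add[OF gauss_bounded_on_mult_poly[of S "\<lambda>\<tau> x. partial (f \<tau>) x i" "g"] gauss_bounded_on_mult_poly[of S f "\<lambda>\<tau> x. partial (g \<tau>) x i"]]])
         (use assms d in \<open>auto simp: poly_smooth_on_def gauss_smooth_on_def partial_mult\<close>)
  qed
qed

lemma poly_smooth_on_bounded_const: assumes "\<And>\<tau>. \<tau> \<in> S \<Longrightarrow> \<bar>c \<tau>\<bar> \<le> B" shows "poly_smooth_on S (\<lambda>\<tau> x. c \<tau>)"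
  unfolding poly_smooth_on_def using assms by (auto simp: partial_const intro: poly_bounded_on_bounded)

lemma poly_smooth_on_coord: "poly_smooth_on S (\<lambda>\<tau> x. x $ j)"
  unfolding poly_smooth_on_def
  by (auto simp: partial_coord poly_bounded_on_vec_nth intro: poly_bounded_on_bounded[where B=1]
      differentiableI[OF has_derivative_vec_nth[OF has_derivative_ident]])

lemma poly_smooth_on_uminus: "poly_smooth_on S f \<Longrightarrow> poly_smooth_on S (\<lambda>\<tau> x. - f \<tau> x)"
  using poly_smooth_on_mult[OF poly_smooth_on_bounded_const[of S "\<lambda>_. -1" 1]] by simp

lemma poly_smooth_on_diff: "poly_smooth_on S f \<Longrightarrow> poly_smooth_on S g \<Longrightarrow> poly_smooth_on S (\<lambda>\<tau> x. f \<tau> x - g \<tau> x)"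
  using poly_smooth_on_add[OF _ poly_smooth_on_uminus[of S g]] by simp

lemma differentiable_borel_measurable:
  fixes f :: "real^'d \<Rightarrow> real"
  assumes "\<And>x. f differentiable (at x)"
  shows "f \<in> borel_measurable borel" "(\<lambda>x. partial f x i) \<in> borel_measurable borel"
proof -
  have "continuous_on UNIV f"
    using assms by (meson continuous_at_imp_continuous_on differentiable_imp_continuous_within)
  then show "f \<in> borel_measurable borel" by (rule borel_measurable_continuous_onI)
  show "(\<lambda>x. partial f x i) \<in> borel_measurable borel"
    unfolding partial_def
    by (rule borel_measurable_directional_derivative) (use assms in \<open>auto intro: has_frechet_derivative_at\<close>)
qed

lemma poly_smooth_on_measurable: "poly_smooth_on S f \<Longrightarrow> \<tau> \<in> S \<Longrightarrow> f \<tau> \<in> borel_measurable borel"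
  "poly_smooth_on S f \<Longrightarrow> \<tau> \<in> S \<Longrightarrow> (\<lambda>x. partial (f \<tau>) x i) \<in> borel_measurable borel"
  unfolding poly_smooth_on_def by (auto intro: differentiable_borel_measurable)

lemma gauss_smooth_on_measurable: "gauss_smooth_on S f \<Longrightarrow> \<tau> \<in> S \<Longrightarrow> f \<tau> \<in> borel_measurable borel"
  "gauss_smooth_on S f \<Longrightarrow> \<tau> \<in> S \<Longrightarrow> (\<lambda>x. partial (f \<tau>) x i) \<in> borel_measurable borel"
  unfolding gauss_smooth_on_def by (auto intro: differentiable_borel_measurable)

lemma gauss_smooth_on_integrable: "gauss_smooth_on S f \<Longrightarrow> \<tau> \<in> S \<Longrightarrow> integrable lborel (f \<tau>)"
  "gauss_smooth_on S f \<Longrightarrow> \<tau> \<in> S \<Longrightarrow> integrable lborel (\<lambda>x. partial (f \<tau>) x i)"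
proof -
  assume a: "gauss_smooth_on S f" "\<tau> \<in> S"
  show "integrable lborel (f \<tau>)"
    using a gauss_smooth_on_measurable(1)[OF a] unfolding gauss_smooth_on_def
      by (auto intro: gauss_bounded_on_integrable)
  show "integrable lborel (\<lambda>x. partial (f \<tau>) x i)"
    using a gauss_smooth_on_measurable(2)[OF a] unfolding gauss_smooth_on_def
    by (auto intro: gauss_bounded_on_integrable[of S "\<lambda>\<tau> x. partial (f \<tau>) x i", simplified])
qed

lemma gauss_smooth_on_integral_partial_eq_0:
  assumes "gauss_smooth_on S h" "\<tau> \<in> S"
  shows "integral\<^sup>L lborel (\<lambda>x. partial (h \<tau>) x i) = 0"
  unfolding partial_def
proof (rule integral_directional_derivative_eq_0)
  show "(h \<tau> has_derivative frechet_derivative (h \<tau>) (at x)) (at x)" for x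
    using assms unfolding gauss_smooth_on_def by (auto intro: has_frechet_derivative_at)
  show "integrable lborel (h \<tau>)" by (rule gauss_smooth_on_integrable(1)[OF assms])
  have "gauss_bounded_on S (\<lambda>\<tau> x. partial (h \<tau>) x i)" using assms unfolding gauss_smooth_on_def by auto
  then show "gauss_bounded_on (UNIV::unit set) (\<lambda>_ x. frechet_derivative (h \<tau>) (at x) (axis i 1))"
    using assms(2) unfolding gauss_bounded_on_def partial_def by blast
qed

lemma gauss_smooth_on_if_grad_ln:
  fixes w :: "real \<Rightarrow> real^'d \<Rightarrow> real"
  assumes pos: "\<And>\<tau> y. \<tau> \<in> S \<Longrightarrow> w \<tau> y > 0"
    and d: "\<And>\<tau> x. \<tau> \<in> S \<Longrightarrow> (\<lambda>y. ln (w \<tau> y)) differentiable (at x)"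
    and g: "gauss_bounded_on S w" and p: "\<And>i. poly_bounded_on S (\<lambda>\<tau> x. grad (\<lambda>y. ln (w \<tau> y)) x $ i)"
  shows "gauss_smooth_on S w"
  unfolding gauss_smooth_on_def
proof (intro conjI allI ballI g)
  show "w \<tau> differentiable (at x)" if "\<tau> \<in> S" for \<tau> x
    using partial_eq_mult_grad_ln(1)[OF pos d] that by blast
  show "gauss_bounded_on S (\<lambda>\<tau> x. partial (w \<tau>) x i)" for i
    by (rule gauss_bounded_on_cong[OF gauss_bounded_on_mult_poly[OF g p[of i]]]) (use partial_eq_mult_grad_ln(2)[OF pos d] in blast)
qed

lemma poly_smooth_on_poly_growth: "poly_smooth_on S f \<Longrightarrow> \<tau> \<in> S \<Longrightarrow> poly_growth (f \<tau>)"
  unfolding poly_growth_def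
  using poly_smooth_on_measurable(1)[of S f \<tau>] unfolding poly_smooth_on_def poly_bounded_on_def by blast

lemma gauss_smooth_on_gauss_decay: "gauss_smooth_on S f \<Longrightarrow> \<tau> \<in> S \<Longrightarrow> gauss_decay (f \<tau>)"
  unfolding gauss_decay_def
  using gauss_smooth_on_measurable(1)[of S f \<tau>] unfolding gauss_smooth_on_def gauss_bounded_on_def by blast

lemma poly_smooth_on_slice: "poly_smooth_on S f \<Longrightarrow> \<tau> \<in> S \<Longrightarrow> poly_smooth_on S' (\<lambda>_. f \<tau>)"
  unfolding poly_smooth_on_def poly_bounded_on_def by blast

lemma gauss_smooth_on_slice: "gauss_smooth_on S f \<Longrightarrow> \<tau> \<in> S \<Longrightarrow> gauss_smooth_on S' (\<lambda>_. f \<tau>)"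
  unfolding gauss_smooth_on_def gauss_bounded_on_def by blast

lemma poly_smooth_on_partial_poly_growth: "poly_smooth_on S f \<Longrightarrow> \<tau> \<in> S \<Longrightarrow> poly_growth (\<lambda>y. partial (f \<tau>) y i)"
  unfolding poly_growth_def
  using poly_smooth_on_measurable(2)[of S f \<tau> i] unfolding poly_smooth_on_def poly_bounded_on_def by blast

lemma poly_smooth_on_const[simp]: "poly_smooth_on S (\<lambda>\<tau> x. c)"
  by (rule poly_smooth_on_bounded_const[where B="\<bar>c\<bar>"]) simp

lemmas poly_smooth_on_simps[simp] = poly_smooth_on_add poly_smooth_on_mult poly_smooth_on_diff poly_smooth_on_uminus poly_smooth_on_coord

lemma poly_smooth_on_sum_any[simp]:
  "(\<And>j. j \<in> A \<Longrightarrow> poly_smooth_on S (f j)) \<Longrightarrow> poly_smooth_on S (\<lambda>\<tau> x. \<Sum>j\<in>A. f j \<tau> x)"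
proof (induction A rule: infinite_finite_induct)
  case (insert a A) then show ?case by simp
qed simp_all

lemma gauss_smooth_on_wint_bounded:
  assumes w: "gauss_smooth_on S w" and p: "poly_growth p"
  shows "\<exists>B. \<forall>\<tau>\<in>S. \<bar>wint (w \<tau>) p\<bar> \<le> B"
proof -
  have "gauss_bounded_on S (\<lambda>\<tau> y. w \<tau> y * p y)"
    using w p unfolding gauss_smooth_on_def poly_growth_def poly_bounded_on_def
      by (intro gauss_bounded_on_mult_poly) (auto simp: poly_bounded_on_def)
  then obtain G :: "real^'a \<Rightarrow> real" where G: "integrable lborel G" "\<And>\<tau> x. \<tau> \<in> S \<Longrightarrow> \<bar>w \<tau> x * p x\<bar> \<le> G x"
    by (rule gauss_bounded_on_dominated) blast
  have "\<bar>wint (w \<tau>) p\<bar> \<le> integral\<^sup>L lborel G" if "\<tau> \<in> S" for \<tau>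
  proof -
    have gauss_decay: "gauss_decay (w \<tau>)" using gauss_smooth_on_gauss_decay[OF w that] .
    have "\<bar>wint (w \<tau>) p\<bar> = norm (integral\<^sup>L lborel (\<lambda>y. w \<tau> y * p y))" by (simp add: wint_def)
    also have "\<dots> \<le> integral\<^sup>L lborel (\<lambda>y. norm (w \<tau> y * p y))" by (rule integral_norm_bound)
    also have "\<dots> \<le> integral\<^sup>L lborel G"
      by (rule integral_mono[OF integrable_norm[OF integrable_gauss_decay_mult[OF gauss_decay p]] G(1)]) (use G(2)[OF that] in auto)
    finally show ?thesis .
  qed
  then show ?thesis by blast
qed

lemma integral_partial_mult_by_parts:
  fixes F p :: "real^'d \<Rightarrow> real"
  assumes F: "gauss_smooth F" and p: "poly_smooth p"
  shows "integrable lborel (\<lambda>y. partial F y i * p y)"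
    and "integrable lborel (\<lambda>y. F y * partial p y i)"
    and "integral\<^sup>L lborel (\<lambda>y. partial F y i * p y) = - integral\<^sup>L lborel (\<lambda>y. F y * partial p y i)"
proof -
  have d: "F differentiable (at y)" "p differentiable (at y)" for y
    using F p unfolding gauss_smooth_on_def poly_smooth_on_def by auto
  have "gauss_bounded_on {0::real} (\<lambda>_ y. partial F y i * p y)"
    using F p unfolding gauss_smooth_on_def poly_smooth_on_def by (intro gauss_bounded_on_mult_poly) auto
  moreover have "(\<lambda>y. partial F y i * p y) \<in> borel_measurable lborel"
    using gauss_smooth_on_measurable(2)[OF F] poly_smooth_on_measurable(1)[OF p] by simp
  ultimately show i1: "integrable lborel (\<lambda>y. partial F y i * p y)"
    using gauss_bounded_on_integrable[of "{0::real}" "\<lambda>_ y. partial F y i * p y" 0] by blast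
  have "gauss_bounded_on {0::real} (\<lambda>_ y. F y * partial p y i)"
    using F p unfolding gauss_smooth_on_def poly_smooth_on_def by (intro gauss_bounded_on_mult_poly) auto
  moreover have "(\<lambda>y. F y * partial p y i) \<in> borel_measurable lborel"
    using gauss_smooth_on_measurable(1)[OF F] poly_smooth_on_measurable(2)[OF p] by simp
  ultimately show i2: "integrable lborel (\<lambda>y. F y * partial p y i)"
    using gauss_bounded_on_integrable[of "{0::real}" "\<lambda>_ y. F y * partial p y i" 0] by blast
  have "integral\<^sup>L lborel (\<lambda>y. partial (\<lambda>y. F y * p y) y i) = 0"
    using gauss_smooth_on_integral_partial_eq_0[OF gauss_smooth_on_mult_poly[OF F p], of 0 i] by simp
  then show "integral\<^sup>L lborel (\<lambda>y. partial F y i * p y) = - integral\<^sup>L lborel (\<lambda>y. F y * partial p y i)"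
    using i1 i2 by (simp add: partial_mult[OF d])
qed

lemma wint_by_parts:
  fixes w p g :: "real^'d \<Rightarrow> real"
  assumes w: "gauss_smooth w" and p: "poly_smooth p"
    and pw: "\<And>y. partial w y j = w y * g y"
  shows "wint w (\<lambda>y. g y * p y) = - wint w (\<lambda>y. partial p y j)"
  using integral_partial_mult_by_parts(3)[OF w p, of j] by (simp add: wint_def pw mult.assoc)

lemma wint_transport_has_derivative:
  fixes w :: "real \<Rightarrow> real^'d \<Rightarrow> real" and W :: "real \<Rightarrow> real^'d \<Rightarrow> 'd \<Rightarrow> real" and \<phi> :: "real^'d \<Rightarrow> real"
  assumes w: "\<And>T. T \<ge> 0 \<Longrightarrow> gauss_smooth_on {0..T} w"
    and W: "\<And>T i. T \<ge> 0 \<Longrightarrow> poly_smooth_on {0..T} (\<lambda>\<tau> y. W \<tau> y i)"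
    and der: "\<And>\<tau> x. \<tau> \<ge> 0 \<Longrightarrow> ((\<lambda>\<sigma>. w \<sigma> x) has_real_derivative - (\<Sum>i\<in>UNIV. partial (\<lambda>y. w \<tau> y * W \<tau> y i) x i)) (at \<tau> within {0..})"
    and \<phi>: "poly_smooth \<phi>"
    and t: "t \<ge> 0"
  shows "((\<lambda>\<tau>. wint (w \<tau>) \<phi>) has_real_derivative wint (w t) (\<lambda>y. \<Sum>i\<in>UNIV. partial \<phi> y i * W t y i)) (at t within {0..})"
proof -
  define F where "F i \<tau> y = w \<tau> y * W \<tau> y i" for i \<tau> y
  define g where "g \<tau> y = - (\<Sum>i\<in>UNIV. partial (F i \<tau>) y i) * \<phi> y" for \<tau> y
  have F: "gauss_smooth_on {0..T} (F i)" if "T \<ge> 0" for T i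
    using gauss_smooth_on_mult_poly[OF w W, OF that that] unfolding F_def by simp
  have Ft: "gauss_smooth (F i t)" for i
    using gauss_smooth_on_slice[OF F[OF t]] t by simp
  note by_parts = integral_partial_mult_by_parts[OF Ft \<phi>]
  have "((\<lambda>\<tau>. integral\<^sup>L lborel (\<lambda>y. w \<tau> y * \<phi> y)) has_real_derivative integral\<^sup>L lborel (g t)) (at t within {0..})"
  proof (rule has_real_derivative_integral_atLeast[OF t])
    show "((\<lambda>\<sigma>. w \<sigma> x * \<phi> x) has_real_derivative g \<tau> x) (at \<tau> within {0..})" if "\<tau> \<ge> 0" for \<tau> x
      using DERIV_cmult_right[OF der[OF that, of x], of "\<phi> x"] by (simp add: g_def F_def[abs_def])
    show "integrable lborel (\<lambda>y. w \<tau> y * \<phi> y)" if "\<tau> \<ge> 0" for \<tau>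
      using integrable_gauss_decay_mult[OF gauss_smooth_on_gauss_decay[OF w] poly_smooth_on_poly_growth[OF \<phi>]] that
      by auto
    have "gauss_bounded_on {0..t+1} (\<lambda>\<tau> y. \<Sum>i\<in>UNIV. partial (F i \<tau>) y i)"
      using F[of "t+1"] t unfolding gauss_smooth_on_def by (intro gauss_bounded_on_sum) auto
    then show "gauss_bounded_on {0..t+1} g"
      using \<phi> unfolding g_def poly_smooth_on_def
      by (intro gauss_bounded_on_mult_poly gauss_bounded_on_uminus) (auto simp: poly_bounded_on_def)
    show "g t \<in> borel_measurable lborel"
      unfolding g_def using by_parts(1) by (simp add: sum_distrib_right)
  qed
  also have "integral\<^sup>L lborel (g t) = (\<Sum>i\<in>UNIV. - integral\<^sup>L lborel (\<lambda>y. partial (F i t) y i * \<phi> y))"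
    unfolding g_def using by_parts(1) by (simp add: sum_distrib_right integral_sum[symmetric] sum_negf)
  also have "\<dots> = (\<Sum>i\<in>UNIV. integral\<^sup>L lborel (\<lambda>y. F i t y * partial \<phi> y i))"
    by (simp add: by_parts(3))
  also have "\<dots> = integral\<^sup>L lborel (\<lambda>y. \<Sum>i\<in>UNIV. F i t y * partial \<phi> y i)"
    using by_parts(2) by (simp add: integral_sum)
  finally show ?thesis by (simp add: wint_def F_def sum_distrib_left mult_ac)
qed

section \<open>The Landau matrix and the matrix \<open>D\<^sub>t\<close>\<close>

lemma landauA_nth: "landauA z $ i $ j = (if i = j then (\<Sum>k\<in>UNIV. z $ k * z $ k) else 0) - z $ i * z $ j"
  by (simp add: landauA_def power2_norm_eq_inner inner_vec_def)

lemma poly_growth_landauA[simp]: "poly_growth (\<lambda>y. landauA (x - y) $ i $ j)"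
  by (cases "i = j") (simp_all add: landauA_nth)

lemma poly_smooth_on_landauA: "poly_smooth_on S (\<lambda>_ y. landauA (x - y) $ i $ j)"
  by (cases "i = j") (simp_all add: landauA_nth)

lemma partial_landauA:
  "partial (\<lambda>y. landauA (x - y) $ i $ j) y j = (if i = j then - (x $ j - y $ j) else 0) + (x $ i - y $ i)"
  by (cases "i = j") (simp_all add: landauA_nth partial_simps if_distrib cong: if_cong)

lemma sum_partial_landauA:
  fixes x y :: "real^'d"
  shows "(\<Sum>j\<in>UNIV. partial (\<lambda>y. landauA (x - y) $ i $ j) y j) = (real CARD('d) - 1) * (x $ i - y $ i)"
proof -
  have "(\<Sum>j\<in>UNIV. partial (\<lambda>y. landauA (x - y) $ i $ j) y j)
      = (\<Sum>j\<in>UNIV. (if i = j then - (x $ j - y $ j) else 0)) + (\<Sum>j\<in>(UNIV::'d set). (x $ i - y $ i))"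
    by (simp add: partial_landauA sum.distrib)
  also have "\<dots> = - (x $ i - y $ i) + real CARD('d) * (x $ i - y $ i)"
    by (simp add: if_distrib cong: if_cong)
  finally show ?thesis by (simp add: algebra_simps)
qed

lemma poly_growth_partial_landauA[simp]: "poly_growth (\<lambda>y. partial (\<lambda>y. landauA (x - y) $ i $ j) y j)"
  by (cases "i = j") (simp_all add: partial_landauA)

lemma landauA_quadratic_form:
  fixes z w :: "real^'d"
  shows "(\<Sum>i\<in>UNIV. \<Sum>j\<in>UNIV. w $ i * landauA z $ i $ j * w $ j) = (z \<bullet> z) * (w \<bullet> w) - (w \<bullet> z)\<^sup>2"
proof -
  define S where "S = (\<Sum>k\<in>UNIV. z $ k * z $ k)"
  have pt: "w $ i * landauA z $ i $ j * w $ j = (if i = j then w $ i * w $ j * S else 0) - (w $ i * z $ i) * (w $ j * z $ j)" for i j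
    by (cases "i = j") (simp_all add: landauA_nth S_def algebra_simps)
  have "(\<Sum>i\<in>UNIV. \<Sum>j\<in>UNIV. w $ i * landauA z $ i $ j * w $ j)
      = (\<Sum>i\<in>UNIV. \<Sum>j\<in>UNIV. (if i = j then w $ i * w $ j * S else 0))
        - (\<Sum>i\<in>UNIV. \<Sum>j\<in>UNIV. (w $ i * z $ i) * (w $ j * z $ j))"
    by (simp only: pt sum_subtractf)
  also have "\<dots> = S * (w \<bullet> w) - (w \<bullet> z)\<^sup>2"
    by (simp add: inner_vec_def power2_eq_square sum_product sum_distrib_left algebra_simps)
  finally show ?thesis by (simp add: S_def inner_vec_def)
qed

lemma landauA_quadratic_form_nonneg: "0 \<le> (\<Sum>i\<in>UNIV. \<Sum>j\<in>UNIV. w $ i * landauA z $ i $ j * w $ j)"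
proof -
  have "0 \<le> (z \<bullet> z) * (w \<bullet> w) - (w \<bullet> z)\<^sup>2"
    using Cauchy_Schwarz_ineq[of w z] by (simp add: mult.commute)
  then show ?thesis by (subst landauA_quadratic_form)
qed

lemma wint_nonneg: "(\<And>y. w y \<ge> 0) \<Longrightarrow> (\<And>y. p y \<ge> 0) \<Longrightarrow> wint w p \<ge> 0"
  unfolding wint_def by (rule integral_nonneg_AE) auto

lemma wnorm2_eq_sum: "wnorm2 M w = (\<Sum>i\<in>UNIV. \<Sum>j\<in>UNIV. w $ i * M $ i $ j * w $ j)"
  by (simp add: wnorm2_def inner_vec_def matrix_vector_mult_def sum_distrib_left algebra_simps)

lemma Sigma_bound: "\<tau> \<ge> 0 \<Longrightarrow> \<bar>Sigma f \<tau> i j\<bar> \<le> \<bar>SigmaInf f i j\<bar> + \<bar>SigmaInf f i j - Sigma0 f i j\<bar>"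
proof -
  assume t: "\<tau> \<ge> 0"
  have e: "exp (- 4 * real CARD('a) * \<tau>) \<le> 1" using t by simp
  have "\<bar>(SigmaInf f i j - Sigma0 f i j) * exp (- 4 * real CARD('a) * \<tau>)\<bar> \<le> \<bar>SigmaInf f i j - Sigma0 f i j\<bar>"
    using e by (simp add: abs_mult mult_left_le)
  then show ?thesis unfolding Sigma_def by linarith
qed

lemma Dmat_nth:
  "Dmat f \<tau> x $ i $ j = (if i = j then (\<Sum>k\<in>UNIV. x $ k * x $ k) + twoE f - 2 * (\<Sum>k\<in>UNIV. meanV f $ k * x $ k) else 0)
        + meanV f $ i * x $ j + meanV f $ j * x $ i - x $ i * x $ j - Sigma f \<tau> i j"
  by (simp add: Dmat_def power2_norm_eq_inner inner_vec_def)

lemma Dmat_sym: "Dmat f \<tau> x $ i $ j = Dmat f \<tau> x $ j $ i"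
proof -
  have "Sigma f \<tau> i j = Sigma f \<tau> j i"
    by (cases "i = j") (simp_all add: Sigma_def SigmaInf_def Sigma0_def mult.commute)
  then show ?thesis by (cases "i = j") (simp_all add: Dmat_nth algebra_simps)
qed

lemma poly_smooth_on_Sigma: "T \<ge> 0 \<Longrightarrow> poly_smooth_on {0..T} (\<lambda>\<tau> x. Sigma f \<tau> i j)"
  by (rule poly_smooth_on_bounded_const[OF Sigma_bound]) auto

lemma poly_smooth_on_Dmat: "T \<ge> 0 \<Longrightarrow> poly_smooth_on {0..T} (\<lambda>\<tau> x. Dmat f \<tau> x $ i $ j)"
  by (cases "i = j") (simp_all add: Dmat_nth poly_smooth_on_Sigma)

locale landau_setting =
  fixes u us :: "real \<Rightarrow> real^'d \<Rightarrow> real"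
    and s :: "real \<Rightarrow> real^'d \<Rightarrow> real^'d"
  assumes pos: "\<forall>\<tau>\<ge>0. \<forall>x. u \<tau> x > 0 \<and> us \<tau> x > 0"
    and mass: "integral\<^sup>L lborel (us 0) = 1"
    and diff: "\<forall>\<tau>\<ge>0. \<forall>x.
        (\<lambda>y. ln (u \<tau> y)) differentiable (at x) \<and>
        grad (\<lambda>y. ln (u \<tau> y)) differentiable (at x) \<and>
        (\<lambda>y. ln (us \<tau> y)) differentiable (at x) \<and>
        grad (\<lambda>y. ln (us \<tau> y)) differentiable (at x) \<and>
        s \<tau> differentiable (at x) \<and>
        (\<lambda>y. us \<tau> y *\<^sub>R landau_vel us \<tau> y) differentiable (at x)"
    and reg_u: "gauss_bounded u" "poly_bounded (\<lambda>\<tau> x. ln (u \<tau> x))"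
      "\<forall>i. poly_bounded (\<lambda>\<tau> x. grad (\<lambda>y. ln (u \<tau> y)) x $ i)"
      "\<forall>i j. poly_bounded (\<lambda>\<tau> x. jacobian (grad (\<lambda>y. ln (u \<tau> y))) (at x) $ i $ j)"
    and reg_us: "gauss_bounded us" "poly_bounded (\<lambda>\<tau> x. ln (us \<tau> x))"
      "\<forall>i. poly_bounded (\<lambda>\<tau> x. grad (\<lambda>y. ln (us \<tau> y)) x $ i)"
      "\<forall>i j. poly_bounded (\<lambda>\<tau> x. jacobian (grad (\<lambda>y. ln (us \<tau> y))) (at x) $ i $ j)"
    and reg_s: "\<forall>i. poly_bounded (\<lambda>\<tau> x. s \<tau> x $ i)"
      "\<forall>i j. poly_bounded (\<lambda>\<tau> x. jacobian (s \<tau>) (at x) $ i $ j)"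
    and landau: "\<forall>\<tau>\<ge>0. \<forall>x. ((\<lambda>\<sigma>. us \<sigma> x) has_real_derivative
        - divg (\<lambda>y. us \<tau> y *\<^sub>R landau_vel us \<tau> y) x) (at \<tau> within {0..})"
    and continuity: "\<forall>\<tau>\<ge>0. \<forall>x. ((\<lambda>\<sigma>. u \<sigma> x) has_real_derivative
        - divg (\<lambda>y. u \<tau> y *\<^sub>R (bfield (us 0) y - Dmat (us 0) \<tau> y *v s \<tau> y)) x)
        (at \<tau> within {0..})"

context landau_setting
begin

definition score_u where "score_u \<tau> x = grad (\<lambda>y. ln (u \<tau> y)) x"
definition score_us where "score_us \<tau> x = grad (\<lambda>y. ln (us \<tau> y)) x"

lemma u_pos: "\<tau> \<ge> 0 \<Longrightarrow> u \<tau> x > 0" and us_pos: "\<tau> \<ge> 0 \<Longrightarrow> us \<tau> x > 0"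
  using pos by auto

lemma gauss_smooth_on_u: "T \<ge> 0 \<Longrightarrow> gauss_smooth_on {0..T} u"
  by (rule gauss_smooth_on_if_grad_ln) (use pos diff reg_u in \<open>auto intro: gauss_bounded_imp_on poly_bounded_imp_on\<close>)

lemma gauss_smooth_on_us: "T \<ge> 0 \<Longrightarrow> gauss_smooth_on {0..T} us"
  by (rule gauss_smooth_on_if_grad_ln) (use pos diff reg_us in \<open>auto intro: gauss_bounded_imp_on poly_bounded_imp_on\<close>)

lemma partial_u: "\<tau> \<ge> 0 \<Longrightarrow> partial (u \<tau>) x i = u \<tau> x * score_u \<tau> x $ i"
  using partial_eq_mult_grad_ln(2)[of "u \<tau>" x i] pos diff by (auto simp: score_u_def)

lemma partial_us: "\<tau> \<ge> 0 \<Longrightarrow> partial (us \<tau>) x i = us \<tau> x * score_us \<tau> x $ i"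
  using partial_eq_mult_grad_ln(2)[of "us \<tau>" x i] pos diff by (auto simp: score_us_def)

lemma differentiable_u: "\<tau> \<ge> 0 \<Longrightarrow> u \<tau> differentiable (at x)"
  using partial_eq_mult_grad_ln(1)[of "u \<tau>" x] pos diff by auto

lemma differentiable_us: "\<tau> \<ge> 0 \<Longrightarrow> us \<tau> differentiable (at x)"
  using partial_eq_mult_grad_ln(1)[of "us \<tau>" x] pos diff by auto

lemma poly_smooth_on_score_u: "T \<ge> 0 \<Longrightarrow> poly_smooth_on {0..T} (\<lambda>\<tau> x. score_u \<tau> x $ i)"
  unfolding poly_smooth_on_def score_u_def
proof (intro conjI allI ballI)
  assume T: "T \<ge> 0"
  show "(\<lambda>x. grad (\<lambda>y. ln (u \<tau> y)) x $ i) differentiable (at x)" if "\<tau> \<in> {0..T}" for \<tau> x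
    using diff that by (auto intro: differentiable_vec_nth)
  show "poly_bounded_on {0..T} (\<lambda>\<tau> x. grad (\<lambda>y. ln (u \<tau> y)) x $ i)"
    using reg_u T by (auto intro: poly_bounded_imp_on)
  show "poly_bounded_on {0..T} (\<lambda>\<tau> x. partial (\<lambda>x. grad (\<lambda>y. ln (u \<tau> y)) x $ i) x j)" for j
    by (rule poly_bounded_on_cong[OF poly_bounded_imp_on[OF reg_u(4)[rule_format, of i j] T]])
       (use diff in \<open>auto simp: partial_vec_nth_eq_jacobian\<close>)
qed

lemma poly_smooth_on_score_us: "T \<ge> 0 \<Longrightarrow> poly_smooth_on {0..T} (\<lambda>\<tau> x. score_us \<tau> x $ i)"
  unfolding poly_smooth_on_def score_us_def
proof (intro conjI allI ballI)
  assume T: "T \<ge> 0"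
  show "(\<lambda>x. grad (\<lambda>y. ln (us \<tau> y)) x $ i) differentiable (at x)" if "\<tau> \<in> {0..T}" for \<tau> x
    using diff that by (auto intro: differentiable_vec_nth)
  show "poly_bounded_on {0..T} (\<lambda>\<tau> x. grad (\<lambda>y. ln (us \<tau> y)) x $ i)"
    using reg_us T by (auto intro: poly_bounded_imp_on)
  show "poly_bounded_on {0..T} (\<lambda>\<tau> x. partial (\<lambda>x. grad (\<lambda>y. ln (us \<tau> y)) x $ i) x j)" for j
    by (rule poly_bounded_on_cong[OF poly_bounded_imp_on[OF reg_us(4)[rule_format, of i j] T]])
       (use diff in \<open>auto simp: partial_vec_nth_eq_jacobian\<close>)
qed

lemma poly_smooth_on_s: "T \<ge> 0 \<Longrightarrow> poly_smooth_on {0..T} (\<lambda>\<tau> x. s \<tau> x $ i)"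
  unfolding poly_smooth_on_def
proof (intro conjI allI ballI)
  assume T: "T \<ge> 0"
  show "(\<lambda>x. s \<tau> x $ i) differentiable (at x)" if "\<tau> \<in> {0..T}" for \<tau> x
    using diff that by (auto intro: differentiable_vec_nth)
  show "poly_bounded_on {0..T} (\<lambda>\<tau> x. s \<tau> x $ i)"
    using reg_s T by (auto intro: poly_bounded_imp_on)
  show "poly_bounded_on {0..T} (\<lambda>\<tau> x. partial (\<lambda>x. s \<tau> x $ i) x j)" for j
    by (rule poly_bounded_on_cong[OF poly_bounded_imp_on[OF reg_s(2)[rule_format, of i j] T]])
       (use diff in \<open>auto simp: partial_vec_nth_eq_jacobian\<close>)
qed

lemma poly_smooth_on_ln_u: "T \<ge> 0 \<Longrightarrow> poly_smooth_on {0..T} (\<lambda>\<tau> x. ln (u \<tau> x))"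
  unfolding poly_smooth_on_def
proof (intro conjI allI ballI)
  assume T: "T \<ge> 0"
  show "(\<lambda>x. ln (u \<tau> x)) differentiable (at x)" if "\<tau> \<in> {0..T}" for \<tau> x
    using diff that by auto
  show "poly_bounded_on {0..T} (\<lambda>\<tau> x. ln (u \<tau> x))"
    using reg_u T by (auto intro: poly_bounded_imp_on)
  show "poly_bounded_on {0..T} (\<lambda>\<tau> x. partial (\<lambda>x. ln (u \<tau> x)) x j)" for j
    by (rule poly_bounded_on_cong[OF poly_bounded_imp_on[OF reg_u(3)[rule_format, of j] T]])
       (simp add: grad_nth_eq_partial)
qed

lemma poly_smooth_on_ln_us: "T \<ge> 0 \<Longrightarrow> poly_smooth_on {0..T} (\<lambda>\<tau> x. ln (us \<tau> x))"
  unfolding poly_smooth_on_def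
proof (intro conjI allI ballI)
  assume T: "T \<ge> 0"
  show "(\<lambda>x. ln (us \<tau> x)) differentiable (at x)" if "\<tau> \<in> {0..T}" for \<tau> x
    using diff that by auto
  show "poly_bounded_on {0..T} (\<lambda>\<tau> x. ln (us \<tau> x))"
    using reg_us T by (auto intro: poly_bounded_imp_on)
  show "poly_bounded_on {0..T} (\<lambda>\<tau> x. partial (\<lambda>x. ln (us \<tau> x)) x j)" for j
    by (rule poly_bounded_on_cong[OF poly_bounded_imp_on[OF reg_us(3)[rule_format, of j] T]])
       (simp add: grad_nth_eq_partial)
qed

section \<open>The Landau field in closed form\<close>

definition "mass_us \<tau> = integral\<^sup>L lborel (us \<tau>)"
definition "mean_us \<tau> k = wint (us \<tau>) (\<lambda>y. y $ k)"
definition "mom2_us \<tau> k l = wint (us \<tau>) (\<lambda>y. y $ k * y $ l)"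
definition "trace_mom2_us \<tau> = (\<Sum>k\<in>UNIV. mom2_us \<tau> k k)"

text \<open>\<open>Dconv \<tau> x = (A * u*\<^sub>\<tau>)(x)\<close>, expanded in the moments of \<open>u*\<^sub>\<tau>\<close>; see \<open>wint_landauA\<close>.\<close>

definition "Dconv \<tau> x i j =
    (if i = j then mass_us \<tau> * (\<Sum>k\<in>UNIV. x $ k * x $ k) - 2 * (\<Sum>k\<in>UNIV. x $ k * mean_us \<tau> k)
       + trace_mom2_us \<tau> else 0)
    - (mass_us \<tau> * (x $ i * x $ j) - x $ i * mean_us \<tau> j - mean_us \<tau> i * x $ j + mom2_us \<tau> i j)"

text \<open>Closed form of the Landau field \<open>v*\<^sub>\<tau>\<close>; see \<open>landau_vel_nth\<close>.\<close>

definition "vel_us \<tau> x i =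
    - (\<Sum>j\<in>UNIV. Dconv \<tau> x i j * score_us \<tau> x $ j) - (real CARD('d) - 1) * (mass_us \<tau> * x $ i - mean_us \<tau> i)"

lemma gauss_decay_us: "\<tau> \<ge> 0 \<Longrightarrow> gauss_decay (us \<tau>)"
  using gauss_smooth_on_gauss_decay[OF gauss_smooth_on_us[of \<tau>], of \<tau>] by simp

lemma poly_growth_score_us: "\<tau> \<ge> 0 \<Longrightarrow> poly_growth (\<lambda>y. score_us \<tau> y $ j)"
  using poly_smooth_on_poly_growth[OF poly_smooth_on_score_us[of \<tau> j], of \<tau>] by simp

lemma wint_landauA: "\<tau> \<ge> 0 \<Longrightarrow> wint (us \<tau>) (\<lambda>y. landauA (x - y) $ i $ j) = Dconv \<tau> x i j"
proof -
  assume t: "\<tau> \<ge> 0"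
  note g = gauss_decay_us[OF t]
  have "wint (us \<tau>) (\<lambda>y. landauA (x - y) $ i $ j) = wint (us \<tau>) (\<lambda>y. (if i = j then (\<Sum>k\<in>UNIV. x $ k * x $ k - 2 * (x $ k * y $ k) + y $ k * y $ k) else 0)
      - (x $ i * x $ j - x $ i * y $ j - y $ i * x $ j + y $ i * y $ j))"
    by (rule arg_cong[where f="wint (us \<tau>)"]) (auto simp: landauA_nth algebra_simps)
  also have "\<dots> = Dconv \<tau> x i j"
    using g
      by (cases "i = j") (simp_all add: Dconv_def mass_us_def mean_us_def mom2_us_def trace_mom2_us_def sum_subtractf sum.distrib
        sum_distrib_left algebra_simps)
  finally show ?thesis .
qed

lemma sum_wint_landauA_score_us:
  assumes t: "\<tau> \<ge> 0"
  shows "(\<Sum>j\<in>UNIV. wint (us \<tau>) (\<lambda>y. landauA (x - y) $ i $ j * score_us \<tau> y $ j)) = - (real CARD('d) - 1) * (x $ i * mass_us \<tau> - mean_us \<tau> i)"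
proof -
  have w: "gauss_smooth (us \<tau>)"
    using gauss_smooth_on_slice[OF gauss_smooth_on_us[OF t], of \<tau>] t by simp
  have "wint (us \<tau>) (\<lambda>y. landauA (x - y) $ i $ j * score_us \<tau> y $ j) = - wint (us \<tau>) (\<lambda>y. partial (\<lambda>y. landauA (x - y) $ i $ j) y j)" for j
    using wint_by_parts[OF w poly_smooth_on_landauA, of j "\<lambda>y. score_us \<tau> y $ j" x i] partial_us[OF t]
    by (simp add: mult.commute)
  then have "(\<Sum>j\<in>UNIV. wint (us \<tau>) (\<lambda>y. landauA (x - y) $ i $ j * score_us \<tau> y $ j))
     = - wint (us \<tau>) (\<lambda>y. \<Sum>j\<in>UNIV. partial (\<lambda>y. landauA (x - y) $ i $ j) y j)"
    using gauss_decay_us[OF t] by (simp add: sum_negf)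
  also have "\<dots> = - wint (us \<tau>) (\<lambda>y. (real CARD('d) - 1) * (x $ i - y $ i))" by (simp only: sum_partial_landauA)
  also have "\<dots> = - (real CARD('d) - 1) * (x $ i * mass_us \<tau> - mean_us \<tau> i)"
    using gauss_decay_us[OF t] by (simp add: mass_us_def mean_us_def algebra_simps)
  finally show ?thesis .
qed

lemma landau_vel_nth:
  assumes t: "\<tau> \<ge> 0"
  shows "landau_vel us \<tau> x $ i = vel_us \<tau> x i"
proof -
  define F where "F y = us \<tau> y *\<^sub>R (landauA (x - y) *v (score_us \<tau> x - score_us \<tau> y))" for y
  have Fi: "F y $ i' = us \<tau> y * (\<Sum>j\<in>UNIV. landauA (x - y) $ i' $ j * (score_us \<tau> x $ j - score_us \<tau> y $ j))" for y i'
    by (simp add: F_def matrix_vector_mult_def)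
  note pg = poly_growth_score_us[OF t] and g = gauss_decay_us[OF t]
  have int: "integrable lborel (\<lambda>y. F y $ i')" for i'
    unfolding Fi using pg by (intro integrable_gauss_decay_mult[OF g]) simp
  have "landau_vel us \<tau> x $ i = - (integral\<^sup>L lborel F) $ i"
    unfolding landau_vel_def F_def[abs_def] score_us_def by simp
  also have "\<dots> = - wint (us \<tau>) (\<lambda>y. \<Sum>j\<in>UNIV. landauA (x - y) $ i $ j * (score_us \<tau> x $ j - score_us \<tau> y $ j))"
    using vec_integral_component(2)[OF int, of i] by (simp add: Fi wint_def)
  also have "\<dots> = - (\<Sum>j\<in>UNIV. Dconv \<tau> x i j * score_us \<tau> x $ j - wint (us \<tau>) (\<lambda>y. landauA (x - y) $ i $ j * score_us \<tau> y $ j))"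
    using g pg t by (simp add: right_diff_distrib wint_landauA)
  also have "\<dots> = vel_us \<tau> x i"
    using sum_wint_landauA_score_us[OF t, of x i] by (simp add: vel_us_def sum_subtractf algebra_simps)
  finally show ?thesis .
qed

lemma mass_us_eq_wint: "mass_us \<tau> = wint (us \<tau>) (\<lambda>y. 1)" by (simp add: mass_us_def)

lemma wint_us_bounded:
  assumes "T \<ge> 0" "poly_growth p" shows "\<exists>B. \<forall>\<tau>\<in>{0..T}. \<bar>wint (us \<tau>) p\<bar> \<le> B"
  by (rule gauss_smooth_on_wint_bounded[OF gauss_smooth_on_us[OF assms(1)] assms(2)])

lemma poly_smooth_on_mass_us: "T \<ge> 0 \<Longrightarrow> poly_smooth_on {0..T} (\<lambda>\<tau> x. mass_us \<tau>)"
  using wint_us_bounded[of T "\<lambda>y. 1"] by (auto simp: mass_us_eq_wint intro: poly_smooth_on_bounded_const)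

lemma poly_smooth_on_mean_us: "T \<ge> 0 \<Longrightarrow> poly_smooth_on {0..T} (\<lambda>\<tau> x. mean_us \<tau> k)"
  using wint_us_bounded[of T "\<lambda>y. y $ k"] by (auto simp: mean_us_def intro: poly_smooth_on_bounded_const)

lemma poly_smooth_on_mom2_us: "T \<ge> 0 \<Longrightarrow> poly_smooth_on {0..T} (\<lambda>\<tau> x. mom2_us \<tau> k l)"
  using wint_us_bounded[of T "\<lambda>y. y $ k * y $ l"]
    by (auto simp: mom2_us_def intro: poly_smooth_on_bounded_const)

lemma poly_smooth_on_trace_mom2_us: "T \<ge> 0 \<Longrightarrow> poly_smooth_on {0..T} (\<lambda>\<tau> x. trace_mom2_us \<tau>)"
  unfolding trace_mom2_us_def by (simp add: poly_smooth_on_mom2_us)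

lemma poly_smooth_on_Dconv: "T \<ge> 0 \<Longrightarrow> poly_smooth_on {0..T} (\<lambda>\<tau> x. Dconv \<tau> x i j)"
  by (cases "i = j") (simp_all add: Dconv_def poly_smooth_on_mass_us poly_smooth_on_mean_us poly_smooth_on_mom2_us poly_smooth_on_trace_mom2_us)

lemma poly_smooth_on_vel_us: "T \<ge> 0 \<Longrightarrow> poly_smooth_on {0..T} (\<lambda>\<tau> x. vel_us \<tau> x i)"
  by (simp add: vel_us_def poly_smooth_on_mass_us poly_smooth_on_mean_us poly_smooth_on_Dconv poly_smooth_on_score_us)

definition "vel_u \<tau> y i = bfield (us 0) y $ i - (\<Sum>j\<in>UNIV. Dmat (us 0) \<tau> y $ i $ j * s \<tau> y $ j)"

lemma poly_smooth_on_vel_u: "T \<ge> 0 \<Longrightarrow> poly_smooth_on {0..T} (\<lambda>\<tau> x. vel_u \<tau> x i)"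
  by (simp add: vel_u_def bfield_def poly_smooth_on_Dmat poly_smooth_on_s)

lemma us_has_derivative:
  assumes t: "\<tau> \<ge> 0"
  shows "((\<lambda>\<sigma>. us \<sigma> x) has_real_derivative - (\<Sum>i\<in>UNIV. partial (\<lambda>y. us \<tau> y * vel_us \<tau> y i) x i)) (at \<tau> within {0..})"
proof -
  have dv: "(\<lambda>y. us \<tau> y *\<^sub>R landau_vel us \<tau> y) differentiable (at x)" using diff t by auto
  have "(\<lambda>y. (us \<tau> y *\<^sub>R landau_vel us \<tau> y) $ i) = (\<lambda>y. us \<tau> y * vel_us \<tau> y i)" for i
    by (rule ext) (simp add: landau_vel_nth[OF t])
  then have "divg (\<lambda>y. us \<tau> y *\<^sub>R landau_vel us \<tau> y) x = (\<Sum>i\<in>UNIV. partial (\<lambda>y. us \<tau> y * vel_us \<tau> y i) x i)"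
    by (simp add: divg_eq_sum_partial[OF dv])
  moreover have "((\<lambda>\<sigma>. us \<sigma> x) has_real_derivative - divg (\<lambda>y. us \<tau> y *\<^sub>R landau_vel us \<tau> y) x) (at \<tau> within {0..})"
    using landau t by blast
  ultimately show ?thesis by simp
qed

lemma u_has_derivative:
  assumes t: "\<tau> \<ge> 0"
  shows "((\<lambda>\<sigma>. u \<sigma> x) has_real_derivative - (\<Sum>i\<in>UNIV. partial (\<lambda>y. u \<tau> y * vel_u \<tau> y i) x i)) (at \<tau> within {0..})"
proof -
  have comp: "(\<lambda>y. (u \<tau> y *\<^sub>R (bfield (us 0) y - Dmat (us 0) \<tau> y *v s \<tau> y)) $ i) = (\<lambda>y. u \<tau> y * vel_u \<tau> y i)" for i
    by (rule ext) (simp add: vel_u_def matrix_vector_mult_def)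
  have dw: "(\<lambda>y. u \<tau> y * vel_u \<tau> y i) differentiable (at x)" for i
    using poly_smooth_on_vel_u[OF t, of i] t differentiable_u[OF t] unfolding poly_smooth_on_def
      by (auto intro: differentiable_mult)
  have dv: "(\<lambda>y. u \<tau> y *\<^sub>R (bfield (us 0) y - Dmat (us 0) \<tau> y *v s \<tau> y)) differentiable (at x)"
  proof (rule differentiable_vec_lambda)
    fix i show "(\<lambda>y. (u \<tau> y *\<^sub>R (bfield (us 0) y - Dmat (us 0) \<tau> y *v s \<tau> y)) $ i) differentiable (at x)"
      unfolding comp by (rule dw)
  qed
  have "divg (\<lambda>y. u \<tau> y *\<^sub>R (bfield (us 0) y - Dmat (us 0) \<tau> y *v s \<tau> y)) x = (\<Sum>i\<in>UNIV. partial (\<lambda>y. u \<tau> y * vel_u \<tau> y i) x i)"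
    by (subst divg_eq_sum_partial[OF dv]) (simp only: comp)
  moreover have "((\<lambda>\<sigma>. u \<sigma> x) has_real_derivative - divg (\<lambda>y. u \<tau> y *\<^sub>R (bfield (us 0) y - Dmat (us 0) \<tau> y *v s \<tau> y)) x) (at \<tau> within {0..})"
    using continuity t by blast
  ultimately show ?thesis by simp
qed

section \<open>Moments of \<open>u*\<close> along the Landau flow\<close>

lemma wint_mult_score_us:
  assumes t: "\<tau> \<ge> 0" and p: "poly_smooth p"
  shows "wint (us \<tau>) (\<lambda>y. p y * score_us \<tau> y $ j) = - wint (us \<tau>) (\<lambda>y. partial p y j)"
proof -
  have w: "gauss_smooth (us \<tau>)"
    using gauss_smooth_on_slice[OF gauss_smooth_on_us[OF t], of \<tau>] t by simp
  show ?thesis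
    using wint_by_parts[OF w p, of j "\<lambda>y. score_us \<tau> y $ j"] partial_us[OF t]
    by (simp add: mult.commute)
qed

lemma Dconv_delta:
  "Dconv \<tau> x i j = (if i = j then 1 else 0) * (mass_us \<tau> * (\<Sum>k\<in>UNIV. x $ k * x $ k) - 2 * (\<Sum>k\<in>UNIV. x $ k * mean_us \<tau> k) + trace_mom2_us \<tau>)
    - (mass_us \<tau> * (x $ i * x $ j) - x $ i * mean_us \<tau> j - mean_us \<tau> i * x $ j + mom2_us \<tau> i j)"
  by (simp add: Dconv_def)

lemma sum_partial_Dconv:
  "(\<Sum>j\<in>UNIV. partial (\<lambda>y. Dconv \<tau> y k j) y j) = - (real CARD('d) - 1) * (mass_us \<tau> * y $ k - mean_us \<tau> k)"
proof -
  have "partial (\<lambda>y. Dconv \<tau> y k j) y j = (if k = j then 1 else 0) * (2 * mass_us \<tau> * y $ j - 2 * mean_us \<tau> j)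
      - (mass_us \<tau> * ((if k = j then 1 else 0) * y $ j + y $ k) - (if k = j then 1 else 0) * mean_us \<tau> j - mean_us \<tau> k)" for j
    unfolding Dconv_delta by (simp add: partial_simps differentiable_sum_any algebra_simps)
  then have "(\<Sum>j\<in>UNIV. partial (\<lambda>y. Dconv \<tau> y k j) y j) = (\<Sum>j\<in>UNIV. (if k = j then 1 else 0) * (2 * mass_us \<tau> * y $ j - 2 * mean_us \<tau> j)
      - (mass_us \<tau> * ((if k = j then 1 else 0) * y $ j + y $ k) - (if k = j then 1 else 0) * mean_us \<tau> j - mean_us \<tau> k))"
    by simp
  also have "\<dots> = (2 * mass_us \<tau> * y $ k - 2 * mean_us \<tau> k) - (mass_us \<tau> * y $ k + real CARD('d) * mass_us \<tau> * y $ k - mean_us \<tau> k - real CARD('d) * mean_us \<tau> k)"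
    by (simp add: sum.distrib sum_subtractf algebra_simps)
  finally show ?thesis by (simp add: algebra_simps)
qed

lemma wint_us_has_derivative:
  assumes "poly_smooth \<phi>" "t \<ge> 0"
  shows "((\<lambda>\<tau>. wint (us \<tau>) \<phi>) has_real_derivative wint (us t) (\<lambda>y. \<Sum>i\<in>UNIV. partial \<phi> y i * vel_us t y i)) (at t within {0..})"
  by (rule wint_transport_has_derivative[OF gauss_smooth_on_us poly_smooth_on_vel_us us_has_derivative assms])

lemma poly_growth_Dconv: "\<tau> \<ge> 0 \<Longrightarrow> poly_growth (\<lambda>y. Dconv \<tau> y i j)"
  using poly_smooth_on_poly_growth[OF poly_smooth_on_Dconv[of \<tau> i j], of \<tau>] by simp

lemma poly_smooth_Dconv: "\<tau> \<ge> 0 \<Longrightarrow> poly_smooth (\<lambda>y. Dconv \<tau> y i j)"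
  using poly_smooth_on_slice[OF poly_smooth_on_Dconv[of \<tau> i j], of \<tau>] by simp

lemma mass_us_eq_1: "\<tau> \<ge> 0 \<Longrightarrow> mass_us \<tau> = 1"
proof -
  have "((\<lambda>\<tau>. wint (us \<tau>) (\<lambda>y. 1)) has_real_derivative 0) (at \<tau> within {0..})" if "\<tau> \<ge> 0" for \<tau>
    using wint_us_has_derivative[of "\<lambda>y. 1" \<tau>] that by (simp add: partial_const)
  then have "\<And>\<tau>. \<tau> \<ge> 0 \<Longrightarrow> (mass_us has_real_derivative 0) (at \<tau> within {0..})"
    unfolding mass_us_def[abs_def] by simp
  moreover have "mass_us 0 = 1" using mass by (simp add: mass_us_def)
  ultimately show "\<tau> \<ge> 0 \<Longrightarrow> mass_us \<tau> = 1" using has_derivative_zero_imp_const[of mass_us \<tau>] by simp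
qed

lemma wint_vel_us_eq_0: "t \<ge> 0 \<Longrightarrow> wint (us t) (\<lambda>y. vel_us t y k) = 0"
proof -
  assume t: "t \<ge> 0"
  note g = gauss_decay_us[OF t] and pg = poly_growth_score_us[OF t] and pD = poly_growth_Dconv[OF t]
  have "wint (us t) (\<lambda>y. vel_us t y k) = - (\<Sum>j\<in>UNIV. wint (us t) (\<lambda>y. Dconv t y k j * score_us t y $ j)) - (real CARD('d) - 1) * (mass_us t * mean_us t k - mean_us t k * mass_us t)"
    unfolding vel_us_def using g pg pD by (simp add: mean_us_def mass_us_def)
  also have "\<dots> = wint (us t) (\<lambda>y. \<Sum>j\<in>UNIV. partial (\<lambda>y. Dconv t y k j) y j)"
    using wint_mult_score_us[OF t poly_smooth_Dconv[OF t]] g poly_smooth_on_partial_poly_growth[OF poly_smooth_Dconv[OF t]]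
      by (simp add: sum_negf)
  also have "\<dots> = 0"
    using g by (simp add: sum_partial_Dconv mass_us_def mean_us_def)
  finally show ?thesis .
qed

lemma mean_us_const: "\<tau> \<ge> 0 \<Longrightarrow> mean_us \<tau> k = mean_us 0 k"
proof -
  have "((\<lambda>\<tau>. mean_us \<tau> k) has_real_derivative 0) (at \<tau> within {0..})" if "\<tau> \<ge> 0" for \<tau>
    using wint_us_has_derivative[of "\<lambda>y. y $ k" \<tau>] that
      by (simp add: partial_coord wint_vel_us_eq_0 mean_us_def)
  then show "\<tau> \<ge> 0 \<Longrightarrow> mean_us \<tau> k = mean_us 0 k"
    using has_derivative_zero_imp_const[of "\<lambda>\<tau>. mean_us \<tau> k" \<tau>] by simp
qed

lemma mom2_us_sym: "mom2_us \<tau> l k = mom2_us \<tau> k l"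
  by (simp add: mom2_us_def mult.commute)

lemma poly_smooth_component_mult_Dconv: "\<tau> \<ge> 0 \<Longrightarrow> poly_smooth (\<lambda>y. y $ l * Dconv \<tau> y k j)"
  using poly_smooth_on_mult[OF poly_smooth_on_coord[of "{0}" l] poly_smooth_Dconv] by simp

lemma wint_Dconv: "t \<ge> 0 \<Longrightarrow> wint (us t) (\<lambda>y. Dconv t y k l) =
   (if k = l then 2 * (mass_us t * trace_mom2_us t - (\<Sum>m\<in>UNIV. mean_us t m * mean_us t m)) else 0) - (2 * mass_us t * mom2_us t k l - 2 * mean_us t k * mean_us t l)"
proof -
  assume t: "t \<ge> 0"
  note g = gauss_decay_us[OF t]
  show ?thesis
  proof (cases "k = l")
    case True
    have "wint (us t) (\<lambda>y. Dconv t y k l) = mass_us t * trace_mom2_us t - 2 * (\<Sum>n\<in>UNIV. mean_us t n * mean_us t n) + trace_mom2_us t * mass_us t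
       - (mass_us t * mom2_us t k k - mean_us t k * mean_us t k - mean_us t k * mean_us t k + mom2_us t k k * mass_us t)"
      unfolding Dconv_def using g True
      by (simp add: mass_us_def[symmetric] mean_us_def[symmetric] mom2_us_def[symmetric] trace_mom2_us_def)
    then show ?thesis using True by (simp add: algebra_simps)
  next
    case False
    have "wint (us t) (\<lambda>y. Dconv t y k l) = - (mass_us t * mom2_us t k l - mean_us t k * mean_us t l - mean_us t k * mean_us t l + mom2_us t k l * mass_us t)"
      unfolding Dconv_def using g False
      by (simp add: mass_us_def[symmetric] mean_us_def[symmetric] mom2_us_def[symmetric])
    then show ?thesis using False by (simp add: algebra_simps)
  qed
qed

lemma wint_component_vel_us: "t \<ge> 0 \<Longrightarrow> wint (us t) (\<lambda>y. y $ l * vel_us t y k) =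
    wint (us t) (\<lambda>y. Dconv t y k l) - 2 * (real CARD('d) - 1) * (mass_us t * mom2_us t k l - mean_us t k * mean_us t l)"
proof -
  assume t: "t \<ge> 0"
  note g = gauss_decay_us[OF t] and pg = poly_growth_score_us[OF t] and pD = poly_growth_Dconv[OF t]
  have "(\<lambda>y. y $ l * vel_us t y k) = (\<lambda>y. - (\<Sum>j\<in>UNIV. (y $ l * Dconv t y k j) * score_us t y $ j) - (real CARD('d) - 1) * (mass_us t * (y $ l * y $ k) - y $ l * mean_us t k))"
    by (rule ext) (simp add: vel_us_def sum_distrib_left algebra_simps)
  then have "wint (us t) (\<lambda>y. y $ l * vel_us t y k) = - (\<Sum>j\<in>UNIV. wint (us t) (\<lambda>y. (y $ l * Dconv t y k j) * score_us t y $ j))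
       - (real CARD('d) - 1) * (mass_us t * mom2_us t l k - mean_us t l * mean_us t k)"
    using g pg pD by (simp add: mean_us_def[symmetric] mom2_us_def[symmetric])
  also have "\<dots> = wint (us t) (\<lambda>y. \<Sum>j\<in>UNIV. partial (\<lambda>y. y $ l * Dconv t y k j) y j) - (real CARD('d) - 1) * (mass_us t * mom2_us t l k - mean_us t l * mean_us t k)"
    using wint_mult_score_us[OF t poly_smooth_component_mult_Dconv[OF t]] g poly_smooth_on_partial_poly_growth[OF poly_smooth_component_mult_Dconv[OF t]]
      by (simp add: sum_negf)
  also have "(\<lambda>y. \<Sum>j\<in>UNIV. partial (\<lambda>y. y $ l * Dconv t y k j) y j) = (\<lambda>y. Dconv t y k l - (real CARD('d) - 1) * (mass_us t * (y $ l * y $ k) - y $ l * mean_us t k))"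
  proof (rule ext)
    fix y :: "real^'d"
    have d: "(\<lambda>y. Dconv t y k j) differentiable (at y)" for j
      using poly_smooth_on_Dconv[of t k j] t unfolding poly_smooth_on_def by auto
    have "(\<Sum>j\<in>UNIV. partial (\<lambda>y. y $ l * Dconv t y k j) y j) = (\<Sum>j\<in>UNIV. (if j = l then Dconv t y k j else 0) + y $ l * partial (\<lambda>y. Dconv t y k j) y j)"
      by (simp add: partial_mult[OF differentiable_component d] partial_coord cong: if_cong)
    also have "\<dots> = Dconv t y k l + y $ l * (- (real CARD('d) - 1) * (mass_us t * y $ k - mean_us t k))"
      by (simp add: sum.distrib sum_distrib_left[symmetric] sum_partial_Dconv)
    finally show "(\<Sum>j\<in>UNIV. partial (\<lambda>y. y $ l * Dconv t y k j) y j) = Dconv t y k l - (real CARD('d) - 1) * (mass_us t * (y $ l * y $ k) - y $ l * mean_us t k)"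
      by (simp add: algebra_simps)
  qed
  also have "wint (us t) (\<lambda>y. Dconv t y k l - (real CARD('d) - 1) * (mass_us t * (y $ l * y $ k) - y $ l * mean_us t k)) =
      wint (us t) (\<lambda>y. Dconv t y k l) - (real CARD('d) - 1) * (mass_us t * mom2_us t l k - mean_us t l * mean_us t k)"
    using g pD by (simp add: mean_us_def[symmetric] mom2_us_def[symmetric])
  finally show ?thesis by (simp add: mom2_us_sym algebra_simps)
qed

lemma poly_growth_vel_us: "t \<ge> 0 \<Longrightarrow> poly_growth (\<lambda>y. vel_us t y k)"
  using poly_smooth_on_poly_growth[OF poly_smooth_on_vel_us[of t k], of t] by simp

lemma meanV_nth: "meanV (us 0) $ k = mean_us 0 k"
proof -
  have g: "gauss_decay (us 0)" using gauss_decay_us[of 0] by simp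
  have "integrable lborel (\<lambda>x. (us 0 x *\<^sub>R x) $ i)" for i
    using integrable_gauss_decay_mult[OF g poly_growth_coord[of i]] by simp
  from vec_integral_component(2)[OF this, of k]
  show ?thesis by (simp add: meanV_def mean_us_def wint_def)
qed

lemma mean_us_eq_meanV: "\<tau> \<ge> 0 \<Longrightarrow> mean_us \<tau> k = meanV (us 0) $ k"
  using mean_us_const[of \<tau> k] by (simp add: meanV_nth)

lemma twoE_eq_trace_mom2_us: "twoE (us 0) = trace_mom2_us 0"
proof -
  have g: "gauss_decay (us 0)" using gauss_decay_us[of 0] by simp
  have "twoE (us 0) = wint (us 0) (\<lambda>y. \<Sum>k\<in>UNIV. y $ k * y $ k)"
    by (simp add: twoE_def wint_def power2_norm_eq_inner inner_vec_def mult.commute)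
  also have "\<dots> = trace_mom2_us 0" using g by (simp add: trace_mom2_us_def mom2_us_def)
  finally show ?thesis .
qed

lemma Sigma0_eq_mom2_us: "Sigma0 (us 0) k l = mom2_us 0 k l"
  by (simp add: Sigma0_def mom2_us_def wint_def mult.commute)

lemma mom2_us_has_derivative:
  assumes t: "t \<ge> 0"
  shows "((\<lambda>\<tau>. mom2_us \<tau> k l) has_real_derivative
     4 * (if k = l then trace_mom2_us t - (norm (meanV (us 0)))\<^sup>2 else 0)
     - 4 * real CARD('d) * (mom2_us t k l - meanV (us 0) $ k * meanV (us 0) $ l)) (at t within {0..})"
proof -
  have p0: "poly_smooth (\<lambda>y. y $ k * y $ l)" by simp
  have e: "(\<lambda>y. \<Sum>i\<in>UNIV. partial (\<lambda>y. y $ k * y $ l) y i * vel_us t y i) = (\<lambda>y. y $ l * vel_us t y k + y $ k * vel_us t y l)"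
    by (rule ext) (simp add: partial_mult partial_coord sum.distrib algebra_simps cong: if_cong)
  have "wint (us t) (\<lambda>y. y $ l * vel_us t y k + y $ k * vel_us t y l) = wint (us t) (\<lambda>y. y $ l * vel_us t y k) + wint (us t) (\<lambda>y. y $ k * vel_us t y l)"
    using gauss_decay_us[OF t] poly_growth_vel_us[OF t] by simp
  also have "\<dots> = 4 * (if k = l then trace_mom2_us t - (norm (meanV (us 0)))\<^sup>2 else 0)
     - 4 * real CARD('d) * (mom2_us t k l - meanV (us 0) $ k * meanV (us 0) $ l)"
    using t by (simp add: wint_component_vel_us wint_Dconv mass_us_eq_1 mean_us_eq_meanV mom2_us_sym
        power2_norm_eq_inner inner_vec_def algebra_simps)
  finally show ?thesis using wint_us_has_derivative[OF p0 t] unfolding e mom2_us_def by simp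
qed

lemma trace_mom2_us_const: "\<tau> \<ge> 0 \<Longrightarrow> trace_mom2_us \<tau> = trace_mom2_us 0"
proof -
  define V where "V = meanV (us 0)"
  have "(trace_mom2_us has_real_derivative 0) (at t within {0..})" if t: "t \<ge> 0" for t
  proof -
    have "((\<lambda>\<tau>. \<Sum>k\<in>UNIV. mom2_us \<tau> k k) has_real_derivative
        (\<Sum>k\<in>UNIV. 4 * (trace_mom2_us t - (norm V)\<^sup>2) - 4 * real CARD('d) * (mom2_us t k k - V $ k * V $ k))) (at t within {0..})"
    proof (intro DERIV_sum)
      fix k
      show "((\<lambda>\<tau>. mom2_us \<tau> k k) has_real_derivative 4 * (trace_mom2_us t - (norm V)\<^sup>2)
          - 4 * real CARD('d) * (mom2_us t k k - V $ k * V $ k)) (at t within {0..})"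
        using mom2_us_has_derivative[OF t, of k k] by (simp add: V_def)
    qed
    also have "(\<Sum>k\<in>UNIV. 4 * (trace_mom2_us t - (norm V)\<^sup>2) - 4 * real CARD('d) * (mom2_us t k k - V $ k * V $ k))
        = real CARD('d) * (4 * (trace_mom2_us t - (norm V)\<^sup>2))
          - 4 * real CARD('d) * ((\<Sum>k\<in>UNIV. mom2_us t k k) - (\<Sum>k\<in>UNIV. V $ k * V $ k))"
      by (simp only: sum_subtractf sum_distrib_left[symmetric] sum_constant card_UNIV) (simp add: algebra_simps)
    also have "\<dots> = 0"
      by (simp add: trace_mom2_us_def power2_norm_eq_inner inner_vec_def)
    finally show ?thesis unfolding trace_mom2_us_def[abs_def] .
  qed
  then show "\<tau> \<ge> 0 \<Longrightarrow> trace_mom2_us \<tau> = trace_mom2_us 0"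
    using has_derivative_zero_imp_const[of trace_mom2_us \<tau>] by simp
qed

lemma mom2_us_eq_Sigma:
  assumes "\<tau> \<ge> 0"
  shows "mom2_us \<tau> k l = Sigma (us 0) \<tau> k l"
proof -
  define d where "d = real CARD('d)"
  define S where "S = SigmaInf (us 0) k l"
  have dpos: "d > 0" by (simp add: d_def)
  define h where "h \<tau> = (mom2_us \<tau> k l - S) * exp (4 * d * \<tau>)" for \<tau>
  have "(h has_real_derivative 0) (at t within {0..})" if t: "t \<ge> 0" for t
  proof -
    let ?D = "4 * (if k = l then trace_mom2_us t - (norm (meanV (us 0)))\<^sup>2 else 0)
       - 4 * d * (mom2_us t k l - meanV (us 0) $ k * meanV (us 0) $ l)"
    have "(h has_real_derivative ?D * exp (4 * d * t) + (mom2_us t k l - S) * (exp (4 * d * t) * (4 * d)))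
        (at t within {0..})"
      unfolding h_def using mom2_us_has_derivative[OF t] by (auto simp: d_def intro!: derivative_eq_intros)
    moreover have "?D * exp (4 * d * t) + (mom2_us t k l - S) * (exp (4 * d * t) * (4 * d)) = 0"
      using dpos trace_mom2_us_const[OF t]
      by (simp add: S_def SigmaInf_def twoE_eq_trace_mom2_us d_def[symmetric] field_simps)
    ultimately show ?thesis by simp
  qed
  then have "h \<tau> = h 0" using has_derivative_zero_imp_const[of h \<tau>] assms by simp
  then have "mom2_us \<tau> k l - S = (mom2_us 0 k l - S) * exp (- 4 * d * \<tau>)"
    by (simp add: h_def exp_minus field_simps)
  then show ?thesis by (simp add: Sigma_def Sigma0_eq_mom2_us S_def d_def algebra_simps)
qed

lemma Dconv_eq_Dmat: "\<tau> \<ge> 0 \<Longrightarrow> Dconv \<tau> x i j = Dmat (us 0) \<tau> x $ i $ j"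
proof -
  assume t: "\<tau> \<ge> 0"
  have T: "trace_mom2_us \<tau> = twoE (us 0)" using trace_mom2_us_const[OF t] twoE_eq_trace_mom2_us by simp
  show ?thesis
    unfolding Dconv_def Dmat_nth using t
    by (simp add: mass_us_eq_1 mean_us_eq_meanV T mom2_us_eq_Sigma mult.commute)
qed

lemma vel_us_eq:
  "\<tau> \<ge> 0 \<Longrightarrow> vel_us \<tau> x i = bfield (us 0) x $ i - (\<Sum>j\<in>UNIV. Dmat (us 0) \<tau> x $ i $ j * score_us \<tau> x $ j)"
  by (simp add: vel_us_def Dconv_eq_Dmat bfield_def mass_us_eq_1 mean_us_eq_meanV algebra_simps)

lemma vel_u_minus_vel_us:
  "\<tau> \<ge> 0 \<Longrightarrow> vel_u \<tau> x i - vel_us \<tau> x i = - (\<Sum>j\<in>UNIV. Dmat (us 0) \<tau> x $ i $ j * (s \<tau> x $ j - score_us \<tau> x $ j))"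
  by (simp add: vel_us_eq vel_u_def right_diff_distrib sum_subtractf)

lemma Dmat_quadratic_form_nonneg:
  assumes t: "\<tau> \<ge> 0"
  shows "0 \<le> (\<Sum>i\<in>UNIV. \<Sum>j\<in>UNIV. w $ i * Dmat (us 0) \<tau> x $ i $ j * w $ j)"
proof -
  note g = gauss_decay_us[OF t]
  have "(\<Sum>i\<in>UNIV. \<Sum>j\<in>UNIV. w $ i * Dmat (us 0) \<tau> x $ i $ j * w $ j)
      = (\<Sum>i\<in>UNIV. \<Sum>j\<in>UNIV. w $ i * wint (us \<tau>) (\<lambda>y. landauA (x - y) $ i $ j) * w $ j)"
    using t by (simp add: wint_landauA Dconv_eq_Dmat)
  also have "\<dots> = wint (us \<tau>) (\<lambda>y. \<Sum>i\<in>UNIV. \<Sum>j\<in>UNIV. w $ i * landauA (x - y) $ i $ j * w $ j)"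
    using g by (simp add: mult.commute)
  also have "\<dots> \<ge> 0"
    by (rule wint_nonneg) (use us_pos[OF t] in \<open>auto simp: less_imp_le intro: landauA_quadratic_form_nonneg\<close>)
  finally show ?thesis .
qed

lemma Dmat_cross_term_le:
  fixes a c :: "real^'d"
  assumes t: "\<tau> \<ge> 0"
  shows "- (\<Sum>i\<in>UNIV. \<Sum>j\<in>UNIV. c $ i * Dmat (us 0) \<tau> x $ i $ j * (a $ j + c $ j))
     \<le> 1/2 * wnorm2 (Dmat (us 0) \<tau> x) a"
proof -
  define D where "D i j = Dmat (us 0) \<tau> x $ i $ j" for i j
  define Q where "Q v = (\<Sum>i\<in>UNIV. \<Sum>j\<in>UNIV. v $ i * D i j * v $ j)" for v :: "real^'d"
  have Q0: "Q v \<ge> 0" for v unfolding Q_def D_def using Dmat_quadratic_form_nonneg[OF t] .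
  have w: "wnorm2 (Dmat (us 0) \<tau> x) a = Q a"
    by (simp add: wnorm2_def Q_def D_def inner_vec_def matrix_vector_mult_def sum_distrib_left algebra_simps)
  have cross: "(\<Sum>i\<in>UNIV. \<Sum>j\<in>UNIV. c $ i * D i j * a $ j) = (\<Sum>i\<in>UNIV. \<Sum>j\<in>UNIV. a $ i * D i j * c $ j)"
    by (subst sum.swap) (simp add: D_def Dmat_sym mult.commute mult.left_commute)
  have exp: "Q (a + c) = Q a + 2 * (\<Sum>i\<in>UNIV. \<Sum>j\<in>UNIV. c $ i * D i j * a $ j) + Q c"
    using cross by (simp add: Q_def algebra_simps sum.distrib)
  have lhs: "(\<Sum>i\<in>UNIV. \<Sum>j\<in>UNIV. c $ i * D i j * (a $ j + c $ j)) = (\<Sum>i\<in>UNIV. \<Sum>j\<in>UNIV. c $ i * D i j * a $ j) + Q c"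
    by (simp add: Q_def algebra_simps sum.distrib)
  have "- ((\<Sum>i\<in>UNIV. \<Sum>j\<in>UNIV. c $ i * D i j * a $ j) + Q c) \<le> 1/2 * Q a"
    \<comment> \<open>twice the difference of the two sides is \<open>Q (a + c) + Q c\<close>\<close>
    using Q0[of "a + c"] Q0[of c] exp by linarith
  then show ?thesis using lhs w by (simp add: D_def)
qed

section \<open>Dissipation of the relative entropy\<close>

lemma KLdens_eq_wint:
  assumes t: "\<tau> \<ge> 0"
  shows "KLdens (u \<tau>) (us \<tau>) = wint (u \<tau>) (\<lambda>y. ln (u \<tau> y) - ln (us \<tau> y))"
proof -
  have mu: "u \<tau> \<in> borel_measurable lborel" and ms: "us \<tau> \<in> borel_measurable lborel"
    using gauss_smooth_on_measurable(1)[OF gauss_smooth_on_u[OF t], of \<tau>] gauss_smooth_on_measurable(1)[OF gauss_smooth_on_us[OF t], of \<tau>] t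
      by auto
  have "KL_divergence (exp 1) (density lborel (us \<tau>)) (density lborel (u \<tau>))
      = (\<integral>x. u \<tau> x * log (exp 1) (u \<tau> x / us \<tau> x) \<partial>lborel)"
    by (rule lborel.KL_density_density) (use mu ms u_pos[OF t] us_pos[OF t] in \<open>auto simp: less_imp_le intro!: AE_I2 dest: order.strict_implies_not_eq\<close>, metis less_irrefl)
  also have "\<dots> = wint (u \<tau>) (\<lambda>y. ln (u \<tau> y) - ln (us \<tau> y))"
  proof -
    have nz: "u \<tau> x \<noteq> 0" "us \<tau> x \<noteq> 0" for x using u_pos[OF t, of x] us_pos[OF t, of x] by auto
    show ?thesis unfolding wint_def using u_pos[OF t] us_pos[OF t] by (simp add: log_def ln_div nz)
  qed
  finally show ?thesis by (simp add: KLdens_def)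
qed

lemma gauss_decay_u: "\<tau> \<ge> 0 \<Longrightarrow> gauss_decay (u \<tau>)"
  using gauss_smooth_on_gauss_decay[OF gauss_smooth_on_u[of \<tau>], of \<tau>] by simp

lemma wint_u_by_parts:
  assumes t: "\<tau> \<ge> 0" and p: "poly_smooth p"
  shows "wint (u \<tau>) (\<lambda>y. score_u \<tau> y $ j * p y) = - wint (u \<tau>) (\<lambda>y. partial p y j)"
proof -
  have w: "gauss_smooth (u \<tau>)"
    using gauss_smooth_on_slice[OF gauss_smooth_on_u[OF t], of \<tau>] t by simp
  show ?thesis using wint_by_parts[OF w p, of j "\<lambda>y. score_u \<tau> y $ j"] partial_u[OF t] by simp
qed

definition "log_ratio t y = ln (u t y) - ln (us t y)"

text \<open>\<open>rel_div_u t = div (u\<^sub>t v\<^sub>t) / u\<^sub>t\<close> and \<open>rel_div_us t = div (u*\<^sub>t v*\<^sub>t) / u*\<^sub>t\<close>.\<close>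

definition "rel_div_u t y = (\<Sum>i\<in>UNIV. score_u t y $ i * vel_u t y i + partial (\<lambda>y. vel_u t y i) y i)"
definition "rel_div_us t y = (\<Sum>i\<in>UNIV. score_us t y $ i * vel_us t y i + partial (\<lambda>y. vel_us t y i) y i)"

lemma poly_smooth_on_log_ratio: "T \<ge> 0 \<Longrightarrow> poly_smooth_on {0..T} log_ratio"
  unfolding log_ratio_def[abs_def] by (intro poly_smooth_on_diff poly_smooth_on_ln_u poly_smooth_on_ln_us)

lemma partial_log_ratio: "t \<ge> 0 \<Longrightarrow> partial (log_ratio t) y i = score_u t y $ i - score_us t y $ i"
proof -
  assume t: "t \<ge> 0"
  have d: "(\<lambda>y. ln (u t y)) differentiable (at y)" "(\<lambda>y. ln (us t y)) differentiable (at y)"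
    using diff t by auto
  show ?thesis unfolding log_ratio_def[abs_def] by (simp add: partial_diff[OF d] score_u_def score_us_def grad_nth_eq_partial)
qed

lemma poly_growth_log_ratio: "t \<ge> 0 \<Longrightarrow> poly_growth (log_ratio t)"
  using poly_smooth_on_poly_growth[OF poly_smooth_on_log_ratio, of t t] by simp

lemma poly_growth_score_u: "t \<ge> 0 \<Longrightarrow> poly_growth (\<lambda>y. score_u t y $ i)"
  using poly_smooth_on_poly_growth[OF poly_smooth_on_score_u, of t t] by simp

lemma poly_growth_vel_u: "t \<ge> 0 \<Longrightarrow> poly_growth (\<lambda>y. vel_u t y i)"
  using poly_smooth_on_poly_growth[OF poly_smooth_on_vel_u, of t t] by simp

lemma wint_u_flux_by_parts:
  assumes t: "t \<ge> 0" and W: "poly_smooth W" and p: "poly_smooth p"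
  shows "wint (u t) (\<lambda>y. (score_u t y $ i * W y + partial W y i) * p y) = - wint (u t) (\<lambda>y. W y * partial p y i)"
proof -
  have d: "W differentiable (at y)" "p differentiable (at y)" for y
    using W p unfolding poly_smooth_on_def by auto
  have pg: "poly_growth W" "poly_growth (\<lambda>y. partial W y i)" "poly_growth p" "poly_growth (\<lambda>y. partial p y i)"
    using poly_smooth_on_poly_growth[OF W] poly_smooth_on_partial_poly_growth[OF W]
      poly_smooth_on_poly_growth[OF p] poly_smooth_on_partial_poly_growth[OF p] by auto
  have "wint (u t) (\<lambda>y. score_u t y $ i * (W y * p y)) = - wint (u t) (\<lambda>y. partial (\<lambda>y. W y * p y) y i)"
    using poly_smooth_on_mult[OF W p] by (intro wint_u_by_parts[OF t]) simp
  then show ?thesis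
    using gauss_decay_u[OF t] poly_growth_score_u[OF t] pg by (simp add: partial_mult[OF d] algebra_simps)
qed

lemma wint_KL_rate_eq:
  assumes t: "t \<ge> 0"
  shows "wint (u t) (\<lambda>y. - rel_div_u t y * log_ratio t y - rel_div_u t y + rel_div_us t y)
       = wint (u t) (\<lambda>y. \<Sum>i\<in>UNIV. (score_u t y $ i - score_us t y $ i) * (vel_u t y i - vel_us t y i))"
proof -
  define Du where "Du i y = score_u t y $ i * vel_u t y i + partial (\<lambda>y. vel_u t y i) y i" for i y
  define Ds where "Ds i y = score_u t y $ i * vel_us t y i + partial (\<lambda>y. vel_us t y i) y i" for i y
  have Wu: "poly_smooth (\<lambda>y. vel_u t y i)" for i
    using poly_smooth_on_slice[OF poly_smooth_on_vel_u[OF t, of i], of t] t by simp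
  have Ws: "poly_smooth (\<lambda>y. vel_us t y i)" for i
    using poly_smooth_on_slice[OF poly_smooth_on_vel_us[OF t, of i], of t] t by simp
  have lr: "poly_smooth (log_ratio t)"
    using poly_smooth_on_slice[OF poly_smooth_on_log_ratio[OF t], of t] t by simp
  have pg: "poly_growth (\<lambda>y. score_u t y $ i)" "poly_growth (\<lambda>y. score_us t y $ i)"
    "poly_growth (\<lambda>y. vel_u t y i)" "poly_growth (\<lambda>y. vel_us t y i)"
    "poly_growth (\<lambda>y. partial (\<lambda>y. vel_u t y i) y j)" "poly_growth (\<lambda>y. partial (\<lambda>y. vel_us t y i) y j)"
    "poly_growth (log_ratio t)" for i j
    using poly_growth_score_u[OF t] poly_growth_score_us[OF t] poly_growth_vel_u[OF t] poly_growth_vel_us[OF t]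
      poly_smooth_on_partial_poly_growth[OF Wu] poly_smooth_on_partial_poly_growth[OF Ws] poly_growth_log_ratio[OF t]
    by auto
  have a: "wint (u t) (\<lambda>y. Du i y * log_ratio t y) = - wint (u t) (\<lambda>y. vel_u t y i * (score_u t y $ i - score_us t y $ i))" for i
    using wint_u_flux_by_parts[OF t Wu[of i] lr, of i] by (simp add: Du_def partial_log_ratio[OF t])
  have b: "wint (u t) (Du i) = 0" for i
    using wint_u_flux_by_parts[OF t Wu[of i], of "\<lambda>_. 1" i] by (simp add: Du_def[abs_def] partial_const)
  have c: "wint (u t) (Ds i) = 0" for i
    using wint_u_flux_by_parts[OF t Ws[of i], of "\<lambda>_. 1" i] by (simp add: Ds_def[abs_def] partial_const)
  have pD: "poly_growth (Du i)" "poly_growth (Ds i)" for i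
    using pg by (simp_all add: Du_def[abs_def] Ds_def[abs_def])
  have "(\<lambda>y. - rel_div_u t y * log_ratio t y - rel_div_u t y + rel_div_us t y) = (\<lambda>y. \<Sum>i\<in>UNIV.
      - (Du i y * log_ratio t y) - Du i y + Ds i y + (score_us t y $ i - score_u t y $ i) * vel_us t y i)"
    by (simp add: rel_div_u_def rel_div_us_def Du_def Ds_def sum.distrib sum_subtractf sum_distrib_right sum_distrib_left
        sum_negf algebra_simps)
  then have "wint (u t) (\<lambda>y. - rel_div_u t y * log_ratio t y - rel_div_u t y + rel_div_us t y)
      = (\<Sum>i\<in>UNIV. - wint (u t) (\<lambda>y. Du i y * log_ratio t y) - wint (u t) (Du i) + wint (u t) (Ds i)
          + wint (u t) (\<lambda>y. (score_us t y $ i - score_u t y $ i) * vel_us t y i))"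
    using gauss_decay_u[OF t] pg pD by simp
  also have "\<dots> = (\<Sum>i\<in>UNIV. wint (u t) (\<lambda>y. vel_u t y i * (score_u t y $ i - score_us t y $ i))
      + wint (u t) (\<lambda>y. (score_us t y $ i - score_u t y $ i) * vel_us t y i))"
    by (simp add: a b c)
  also have "\<dots> = wint (u t) (\<lambda>y. \<Sum>i\<in>UNIV. (score_u t y $ i - score_us t y $ i) * (vel_u t y i - vel_us t y i))"
  proof -
    have "(\<lambda>y. \<Sum>i\<in>UNIV. (score_u t y $ i - score_us t y $ i) * (vel_u t y i - vel_us t y i)) = (\<lambda>y. \<Sum>i\<in>UNIV.
       vel_u t y i * (score_u t y $ i - score_us t y $ i) + (score_us t y $ i - score_u t y $ i) * vel_us t y i)"
      by (simp add: algebra_simps)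
    then show ?thesis using gauss_decay_u[OF t] pg by simp
  qed
  finally show ?thesis .
qed

lemma sum_partial_flux_u: "\<tau> \<ge> 0 \<Longrightarrow> (\<Sum>i\<in>UNIV. partial (\<lambda>y. u \<tau> y * vel_u \<tau> y i) x i) = u \<tau> x * rel_div_u \<tau> x"
proof -
  assume t: "\<tau> \<ge> 0"
  have d: "(\<lambda>y. vel_u \<tau> y i) differentiable (at x)" for i
    using poly_smooth_on_vel_u[OF t, of i] t unfolding poly_smooth_on_def by auto
  show ?thesis
    by (simp add: partial_mult[OF differentiable_u[OF t] d] partial_u[OF t] rel_div_u_def sum_distrib_left algebra_simps)
qed

lemma sum_partial_flux_us:
  "\<tau> \<ge> 0 \<Longrightarrow> (\<Sum>i\<in>UNIV. partial (\<lambda>y. us \<tau> y * vel_us \<tau> y i) x i) = us \<tau> x * rel_div_us \<tau> x"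
proof -
  assume t: "\<tau> \<ge> 0"
  have d: "(\<lambda>y. vel_us \<tau> y i) differentiable (at x)" for i
    using poly_smooth_on_vel_us[OF t, of i] t unfolding poly_smooth_on_def by auto
  show ?thesis
    by (simp add: partial_mult[OF differentiable_us[OF t] d] partial_us[OF t] rel_div_us_def sum_distrib_left algebra_simps)
qed

lemma poly_bounded_on_rel_div_u: "T \<ge> 0 \<Longrightarrow> poly_bounded_on {0..T} rel_div_u"
proof -
  assume T: "T \<ge> 0"
  have "poly_bounded_on {0..T} (\<lambda>\<tau> y. \<Sum>i\<in>UNIV. score_u \<tau> y $ i * vel_u \<tau> y i + partial (\<lambda>y. vel_u \<tau> y i) y i)"
    using poly_smooth_on_score_u[OF T] poly_smooth_on_vel_u[OF T] unfolding poly_smooth_on_def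
      by (intro poly_bounded_on_sum poly_bounded_on_add poly_bounded_on_mult) auto
  then show ?thesis unfolding rel_div_u_def[abs_def] .
qed

lemma poly_bounded_on_rel_div_us: "T \<ge> 0 \<Longrightarrow> poly_bounded_on {0..T} rel_div_us"
proof -
  assume T: "T \<ge> 0"
  have "poly_bounded_on {0..T} (\<lambda>\<tau> y. \<Sum>i\<in>UNIV. score_us \<tau> y $ i * vel_us \<tau> y i + partial (\<lambda>y. vel_us \<tau> y i) y i)"
    using poly_smooth_on_score_us[OF T] poly_smooth_on_vel_us[OF T] unfolding poly_smooth_on_def
      by (intro poly_bounded_on_sum poly_bounded_on_add poly_bounded_on_mult) auto
  then show ?thesis unfolding rel_div_us_def[abs_def] .
qed

lemma poly_growth_rel_div_u: "t \<ge> 0 \<Longrightarrow> poly_growth (rel_div_u t)"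
proof -
  assume t: "t \<ge> 0"
  have "poly_growth (\<lambda>y. \<Sum>i\<in>UNIV. score_u t y $ i * vel_u t y i + partial (\<lambda>y. vel_u t y i) y i)"
    using poly_smooth_on_poly_growth[OF poly_smooth_on_score_u[OF t], of t] poly_smooth_on_poly_growth[OF poly_smooth_on_vel_u[OF t], of t] poly_smooth_on_partial_poly_growth[OF poly_smooth_on_vel_u[OF t], of t] t
      by simp
  then show ?thesis unfolding rel_div_u_def[abs_def] .
qed

lemma poly_growth_rel_div_us: "t \<ge> 0 \<Longrightarrow> poly_growth (rel_div_us t)"
proof -
  assume t: "t \<ge> 0"
  have "poly_growth (\<lambda>y. \<Sum>i\<in>UNIV. score_us t y $ i * vel_us t y i + partial (\<lambda>y. vel_us t y i) y i)"
    using poly_growth_score_us[OF t] poly_growth_vel_us[OF t] poly_smooth_on_partial_poly_growth[OF poly_smooth_on_vel_us[OF t], of t] t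
      by simp
  then show ?thesis unfolding rel_div_us_def[abs_def] .
qed

lemma u_log_ratio_has_derivative:
  assumes t: "\<tau> \<ge> 0"
  shows "((\<lambda>\<sigma>. u \<sigma> x * log_ratio \<sigma> x) has_real_derivative
    u \<tau> x * (- rel_div_u \<tau> x * log_ratio \<tau> x - rel_div_u \<tau> x + rel_div_us \<tau> x)) (at \<tau> within {0..})"
proof -
  have du: "((\<lambda>\<sigma>. u \<sigma> x) has_real_derivative - (u \<tau> x * rel_div_u \<tau> x)) (at \<tau> within {0..})"
    using u_has_derivative[OF t, of x] sum_partial_flux_u[OF t, of x] by simp
  have ds: "((\<lambda>\<sigma>. us \<sigma> x) has_real_derivative - (us \<tau> x * rel_div_us \<tau> x)) (at \<tau> within {0..})"
    using us_has_derivative[OF t, of x] sum_partial_flux_us[OF t, of x] by simp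
  have "((\<lambda>\<sigma>. u \<sigma> x * (ln (u \<sigma> x) - ln (us \<sigma> x))) has_real_derivative
      - (u \<tau> x * rel_div_u \<tau> x) * (ln (u \<tau> x) - ln (us \<tau> x))
      + (1 / u \<tau> x * - (u \<tau> x * rel_div_u \<tau> x) - 1 / us \<tau> x * - (us \<tau> x * rel_div_us \<tau> x)) * u \<tau> x)
      (at \<tau> within {0..})"
    using DERIV_chain2[OF DERIV_ln_divide[OF u_pos[OF t]] du] DERIV_chain2[OF DERIV_ln_divide[OF us_pos[OF t]] ds]
    by (intro DERIV_mult du DERIV_diff)
  moreover have "- (u \<tau> x * rel_div_u \<tau> x) * (ln (u \<tau> x) - ln (us \<tau> x))
      + (1 / u \<tau> x * - (u \<tau> x * rel_div_u \<tau> x) - 1 / us \<tau> x * - (us \<tau> x * rel_div_us \<tau> x)) * u \<tau> x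
      = u \<tau> x * (- rel_div_u \<tau> x * log_ratio \<tau> x - rel_div_u \<tau> x + rel_div_us \<tau> x)"
    using u_pos[OF t, of x] us_pos[OF t, of x] by (simp add: log_ratio_def field_simps)
  ultimately show ?thesis by (simp add: log_ratio_def)
qed

lemma KLdens_has_derivative:
  assumes t: "t \<ge> 0"
  shows "((\<lambda>\<sigma>. KLdens (u \<sigma>) (us \<sigma>)) has_real_derivative
    wint (u t) (\<lambda>y. - rel_div_u t y * log_ratio t y - rel_div_u t y + rel_div_us t y)) (at t within {0..})"
proof -
  define r where "r \<sigma> y = - rel_div_u \<sigma> y * log_ratio \<sigma> y - rel_div_u \<sigma> y + rel_div_us \<sigma> y" for \<sigma> y
  have r: "poly_bounded_on {0..t+1} r"
    using poly_bounded_on_rel_div_u[of "t+1"] poly_bounded_on_rel_div_us[of "t+1"] poly_smooth_on_log_ratio[of "t+1"] t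
    unfolding r_def poly_smooth_on_def
    by (intro poly_bounded_on_add poly_bounded_on_diff poly_bounded_on_mult poly_bounded_on_uminus) auto
  have "((\<lambda>\<sigma>. integral\<^sup>L lborel (\<lambda>x. u \<sigma> x * log_ratio \<sigma> x)) has_real_derivative
      integral\<^sup>L lborel (\<lambda>x. u t x * r t x)) (at t within {0..})"
  proof (rule has_real_derivative_integral_atLeast[OF t])
    show "((\<lambda>\<sigma>. u \<sigma> x * log_ratio \<sigma> x) has_real_derivative u \<tau> x * r \<tau> x) (at \<tau> within {0..})"
      if "\<tau> \<ge> 0" for \<tau> x
      using u_log_ratio_has_derivative[OF that] by (simp add: r_def)
    show "integrable lborel (\<lambda>x. u \<tau> x * log_ratio \<tau> x)" if "\<tau> \<ge> 0" for \<tau>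
      using integrable_gauss_decay_mult[OF gauss_decay_u[OF that] poly_growth_log_ratio[OF that]] .
    show "gauss_bounded_on {0..t+1} (\<lambda>\<sigma> x. u \<sigma> x * r \<sigma> x)"
      using gauss_smooth_on_u[of "t+1"] t unfolding gauss_smooth_on_def
      by (intro gauss_bounded_on_mult_poly r) auto
    have "poly_growth (r t)"
      using poly_growth_rel_div_u[OF t] poly_growth_rel_div_us[OF t] poly_growth_log_ratio[OF t]
      by (simp add: r_def[abs_def])
    then show "(\<lambda>x. u t x * r t x) \<in> borel_measurable lborel"
      using gauss_decay_u[OF t] unfolding gauss_decay_def poly_growth_def
        by (auto intro: borel_measurable_times)
  qed
  then have "((\<lambda>\<sigma>. KLdens (u \<sigma>) (us \<sigma>)) has_real_derivative integral\<^sup>L lborel (\<lambda>x. u t x * r t x)) (at t within {0..})"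
    by (rule has_field_derivative_transform_within[where d=1])
       (use t in \<open>auto simp: KLdens_eq_wint wint_def log_ratio_def\<close>)
  then show ?thesis by (simp add: r_def wint_def)
qed

lemma wint_KL_rate_le:
  assumes t: "t \<ge> 0"
  shows "wint (u t) (\<lambda>y. - rel_div_u t y * log_ratio t y - rel_div_u t y + rel_div_us t y)
     \<le> 1/2 * integral\<^sup>L lborel (\<lambda>x. wnorm2 (Dmat (us 0) t x) (s t x - grad (\<lambda>y. ln (u t y)) x) * u t x)"
proof -
  note g = gauss_decay_u[OF t]
  define a where "a x = s t x - score_u t x" for x
  define c where "c x = score_u t x - score_us t x" for x
  have pt: "(\<Sum>i\<in>UNIV. (score_u t y $ i - score_us t y $ i) * (vel_u t y i - vel_us t y i))
      = - (\<Sum>i\<in>UNIV. \<Sum>j\<in>UNIV. c y $ i * Dmat (us 0) t y $ i $ j * (a y $ j + c y $ j))" for y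
    by (simp add: vel_u_minus_vel_us[OF t] a_def c_def sum_distrib_left sum_negf algebra_simps)
  have pa: "poly_growth (\<lambda>y. a y $ i)" for i
    unfolding a_def using poly_smooth_on_poly_growth[OF poly_smooth_on_s[OF t], of t] poly_growth_score_u[OF t] t
    by simp
  have pc: "poly_growth (\<lambda>y. c y $ i)" for i
    unfolding c_def using poly_growth_score_us[OF t] poly_growth_score_u[OF t] by simp
  have pD: "poly_growth (\<lambda>y. Dmat (us 0) t y $ i $ j)" for i j
    using poly_smooth_on_poly_growth[OF poly_smooth_on_Dmat[OF t], of t] t by simp
  have "wint (u t) (\<lambda>y. - rel_div_u t y * log_ratio t y - rel_div_u t y + rel_div_us t y)
      = wint (u t) (\<lambda>y. - (\<Sum>i\<in>UNIV. \<Sum>j\<in>UNIV. c y $ i * Dmat (us 0) t y $ i $ j * (a y $ j + c y $ j)))"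
    by (subst wint_KL_rate_eq[OF t]) (simp only: pt)
  also have "\<dots> \<le> wint (u t) (\<lambda>y. 1/2 * wnorm2 (Dmat (us 0) t y) (a y))"
    unfolding wint_def
  proof (rule integral_mono)
    show "integrable lborel (\<lambda>y. u t y * - (\<Sum>i\<in>UNIV. \<Sum>j\<in>UNIV. c y $ i * Dmat (us 0) t y $ i $ j * (a y $ j + c y $ j)))"
      using pa pc pD by (intro integrable_gauss_decay_mult[OF g]) simp
    show "integrable lborel (\<lambda>y. u t y * (1/2 * wnorm2 (Dmat (us 0) t y) (a y)))"
      using pa pc pD by (intro integrable_gauss_decay_mult[OF g]) (simp add: wnorm2_eq_sum)
    show "u t y * - (\<Sum>i\<in>UNIV. \<Sum>j\<in>UNIV. c y $ i * Dmat (us 0) t y $ i $ j * (a y $ j + c y $ j))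
        \<le> u t y * (1/2 * wnorm2 (Dmat (us 0) t y) (a y))" for y
      using Dmat_cross_term_le[OF t, of "c y" y "a y"] u_pos[OF t, of y] by (intro mult_left_mono) auto
  qed
  also have "\<dots> = 1/2 * integral\<^sup>L lborel (\<lambda>x. wnorm2 (Dmat (us 0) t x) (s t x - grad (\<lambda>y. ln (u t y)) x) * u t x)"
    by (simp add: wint_def a_def score_u_def mult.commute)
  finally show ?thesis .
qed

end

theorem corollary4p2:
  fixes u us :: "real \<Rightarrow> real^'d \<Rightarrow> real"
    and s :: "real \<Rightarrow> real^'d \<Rightarrow> real^'d"
    and t :: real
  assumes t_nonneg: "t \<ge> 0"
    and pos: "\<forall>\<tau>\<ge>0. \<forall>x. u \<tau> x > 0 \<and> us \<tau> x > 0"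
    and mass: "integral\<^sup>L lborel (u 0) = 1" "integral\<^sup>L lborel (us 0) = 1"
    and diff: "\<forall>\<tau>\<ge>0. \<forall>x.
        (\<lambda>y. ln (u \<tau> y)) differentiable (at x) \<and>
        grad (\<lambda>y. ln (u \<tau> y)) differentiable (at x) \<and>
        (\<lambda>y. ln (us \<tau> y)) differentiable (at x) \<and>
        grad (\<lambda>y. ln (us \<tau> y)) differentiable (at x) \<and>
        s \<tau> differentiable (at x) \<and>
        (\<lambda>y. us \<tau> y *\<^sub>R landau_vel us \<tau> y) differentiable (at x)"
    and reg_u: "gauss_bounded u" "poly_bounded (\<lambda>\<tau> x. ln (u \<tau> x))"
      "\<forall>i. poly_bounded (\<lambda>\<tau> x. grad (\<lambda>y. ln (u \<tau> y)) x $ i)"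
      "\<forall>i j. poly_bounded (\<lambda>\<tau> x. jacobian (grad (\<lambda>y. ln (u \<tau> y))) (at x) $ i $ j)"
    and reg_us: "gauss_bounded us" "poly_bounded (\<lambda>\<tau> x. ln (us \<tau> x))"
      "\<forall>i. poly_bounded (\<lambda>\<tau> x. grad (\<lambda>y. ln (us \<tau> y)) x $ i)"
      "\<forall>i j. poly_bounded (\<lambda>\<tau> x. jacobian (grad (\<lambda>y. ln (us \<tau> y))) (at x) $ i $ j)"
    and reg_s: "\<forall>i. poly_bounded (\<lambda>\<tau> x. s \<tau> x $ i)"
      "\<forall>i j. poly_bounded (\<lambda>\<tau> x. jacobian (s \<tau>) (at x) $ i $ j)"
    and landau: "\<forall>\<tau>\<ge>0. \<forall>x. ((\<lambda>\<sigma>. us \<sigma> x) has_real_derivative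
        - divg (\<lambda>y. us \<tau> y *\<^sub>R landau_vel us \<tau> y) x) (at \<tau> within {0..})"
    and continuity: "\<forall>\<tau>\<ge>0. \<forall>x. ((\<lambda>\<sigma>. u \<sigma> x) has_real_derivative
        - divg (\<lambda>y. u \<tau> y *\<^sub>R (bfield (us 0) y - Dmat (us 0) \<tau> y *v s \<tau> y)) x)
        (at \<tau> within {0..})"
    and mom1: "\<forall>i. integral\<^sup>L lborel (\<lambda>x. x $ i * u 0 x) = integral\<^sup>L lborel (\<lambda>x. x $ i * us 0 x)"
    and mom2: "\<forall>i j. integral\<^sup>L lborel (\<lambda>x. x $ i * x $ j * u 0 x)
                   = integral\<^sup>L lborel (\<lambda>x. x $ i * x $ j * us 0 x)"
  shows "\<exists>D'. ((\<lambda>\<sigma>. KLdens (u \<sigma>) (us \<sigma>)) has_real_derivative D') (at t within {0..}) \<and>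
    D' \<le> 1/2 * integral\<^sup>L lborel
            (\<lambda>x. wnorm2 (Dmat (us 0) t x) (s t x - grad (\<lambda>y. ln (u t y)) x) * u t x)"
proof -
  interpret landau_setting u us s
    by (rule landau_setting.intro) (fact pos mass diff reg_u reg_us reg_s landau continuity)+
  show ?thesis using KLdens_has_derivative[OF t_nonneg] wint_KL_rate_le[OF t_nonneg] by blast
qed

end
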